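(* Let $H,\mathcal{N}\in C^\infty(\mathbb{R}^{2n})$ with $\mathcal{N}>0$, and consider on $\mathbb{R}^{2n}$ with coordinates $(q,p)\in\mathbb{R}^n\times\mathbb{R}^n$ and symplectic form $\Omega=\mathrm{d}q\wedge\mathrm{d}p$ the conformally Hamiltonian system $\dot q=\mathcal{N}\,\partial H/\partial p$, $\dot p=-\mathcal{N}\,\partial H/\partial q$. For $E\in\mathbb{R}$ let $K_E=\mathcal{N}(H-E)$ (the altered Hamiltonian), and let $\Psi_{h,E}:\mathbb{R}^{2n}\to\mathbb{R}^{2n}$ be a symplectic integrator with step size $h$ applied to the Hamiltonian system with Hamiltonian $K_E$, whose modified Hamiltonian is the formal power series $K_{mod}(q,p;h,E)=K_E(q,p)+hK_1(q,p;E)+h^2K_2(q,p;E)+\cdots$, with truncations $K^{(\ell)}_{mod}=K_E+hK_1+\dots+h^\ell K_\ell$. Let $\mathcal{E}(q,p;h)=H(q,p)+h\mathcal{E}_1(q,p)+h^2\mathcal{E}_2(q,p)+\cdots$ be the formal power series (modified conformal Hamiltonian) defined by $K_{mod}(q,p;h,\mathcal{E}(q,p;h))=0$, with truncations $\mathcal{E}^{(\ell)}=H+h\mathcal{E}_1+\dots+h^\ell\mathcal{E}_\ell$. Fix $\ell\in\mathbb{N}$ and define $\Phi^{(\ell)}_h(q,p)=\Psi_{h,\mathcal{E}^{(\ell)}(q,p;h)}(q,p)$. Then $$\Phi^{(\ell)}_h(q(t),p(t))=(q(t+h),p(t+h))+\mathcal{O}(h^{\ell+2})$$ for any solution $(q(t),p(t))$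 of $$\dot q=-\frac{\partial K^{(\ell)}_{mod}}{\partial E}\big(q,p;h,\mathcal{E}^{(\ell)}(q,p;h)\big)\frac{\partial\mathcal{E}^{(\ell)}}{\partial p}(q,p;h),\qquad \dot p=\frac{\partial K^{(\ell)}_{mod}}{\partial E}\big(q,p;h,\mathcal{E}^{(\ell)}(q,p;h)\big)\frac{\partial\mathcal{E}^{(\ell)}}{\partial q}(q,p;h).$$ Moreover, for sufficiently small $h$ this system is conformally Hamiltonian, with Hamiltonian $\mathcal{E}^{(\ell)}(\cdot;h)$ and conformal factor $\mathcal{N}^{(\ell)}_{mod}(q,p;h)=-\frac{\partial K^{(\ell)}_{mod}}{\partial E}\big(q,p;h,\mathcal{E}^{(\ell)}(q,p;h)\big)$.
   Context: A consistent numerical integrator for a vector field $f$ is a family of maps $\Psi_h$ with $\Psi_h(x)=x+hf(x)+\mathcal{O}(h^2)$; it is symplectic if, when applied to Hamiltonian vector fields, $\Psi_h^*\Omega=\Omega$. For a symplectic integrator applied to a Hamiltonian system with Hamiltonian $K$, the modified Hamiltonian is a formal power series $K+hK_1+h^2K_2+\cdots$ such that, for each $\ell$, solutions $x(t)$ of the Hamiltonian system with Hamiltonian given by its truncation after the $h^\ell$ term satisfy $\Psi_h(x(t))=x(t+h)+\mathcal{O}(h^{\ell+2})$. The series $\mathcal{E}$ exists as a formal power series by the implicit function theorem applied order by order (since $\partial K_E/\partial E=-\mathcal{N}\neq0$), and its truncation satisfies $K^{(\ell)}_{mod}(q,p;h,\mathcal{E}^{(\ell)}(q,p;h))=\mathcal{O}(h^{\ell+1})$.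 A vector field $X$ is conformally Hamiltonian with Hamiltonian $F$ and conformal factor $M>0$ if $\mathbf{i}_X\Omega=M\,\mathrm{d}F$, i.e. $\dot q=M\,\partial F/\partial p$, $\dot p=-M\,\partial F/\partial q$. *)

theory Defs
  imports "HOL-Analysis.Analysis"
begin

fun Ck :: "nat \<Rightarrow> ('a::euclidean_space \<Rightarrow> real) \<Rightarrow> bool" where
  "Ck 0 f = continuous_on UNIV f"
| "Ck (Suc k) f = ((\<forall>x. f differentiable (at x)) \<and>
                    (\<forall>v. Ck k (\<lambda>x. frechet_derivative f (at x) v)))"

definition smooth :: "('a::euclidean_space \<Rightarrow> real) \<Rightarrow> bool" where
  "smooth f \<longleftrightarrow> (\<forall>k. Ck k f)"

definition dq :: "((real^'n) \<times> (real^'n) \<Rightarrow> real) \<Rightarrow> (real^'n) \<times> (real^'n) \<Rightarrow> real^'n" where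
  "dq F x = (\<chi> i. frechet_derivative F (at x) (axis i 1, 0))"

definition dp :: "((real^'n) \<times> (real^'n) \<Rightarrow> real) \<Rightarrow> (real^'n) \<times> (real^'n) \<Rightarrow> real^'n" where
  "dp F x = (\<chi> i. frechet_derivative F (at x) (0, axis i 1))"

definition ham_field :: "((real^'n) \<times> (real^'n) \<Rightarrow> real) \<Rightarrow> (real^'n) \<times> (real^'n) \<Rightarrow> (real^'n) \<times> (real^'n)" where
  "ham_field K x = (dp K x, - dq K x)"

definition symp_form :: "(real^'n) \<times> (real^'n) \<Rightarrow> (real^'n) \<times> (real^'n) \<Rightarrow> real" where
  "symp_form u v = fst u \<bullet> snd v - snd u \<bullet> fst v"

definition conf_hamiltonian_on ::
  "((real^'n) \<times> (real^'n) \<Rightarrow> (real^'n) \<times> (real^'n)) \<Rightarrow> ((real^'n) \<times> (real^'n) \<Rightarrow> real)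
   \<Rightarrow> ((real^'n) \<times> (real^'n) \<Rightarrow> real) \<Rightarrow> ((real^'n) \<times> (real^'n)) set \<Rightarrow> bool" where
  "conf_hamiltonian_on X F M U \<longleftrightarrow>
     (\<forall>x\<in>U. M x > 0 \<and> X x = (M x *\<^sub>R dp F x, - (M x *\<^sub>R dq F x)))"

definition solves_on :: "('a::real_normed_vector \<Rightarrow> 'a) \<Rightarrow> (real \<Rightarrow> 'a) \<Rightarrow> real set \<Rightarrow> bool" where
  "solves_on X y T \<longleftrightarrow> (\<forall>s\<in>T. (y has_vector_derivative X (y s)) (at s within T))"

definition Kt :: "((real^'n) \<times> (real^'n) \<Rightarrow> real) \<Rightarrow> ((real^'n) \<times> (real^'n) \<Rightarrow> real)
   \<Rightarrow> (nat \<Rightarrow> (real^'n) \<times> (real^'n) \<Rightarrow> real \<Rightarrow> real) \<Rightarrow> nat \<Rightarrow> real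
   \<Rightarrow> (real^'n) \<times> (real^'n) \<Rightarrow> real \<Rightarrow> real" where
  "Kt H N K l h x E = N x * (H x - E) + (\<Sum>j=1..l. h ^ j * K j x E)"

definition Et :: "((real^'n) \<times> (real^'n) \<Rightarrow> real) \<Rightarrow> (nat \<Rightarrow> (real^'n) \<times> (real^'n) \<Rightarrow> real)
   \<Rightarrow> nat \<Rightarrow> real \<Rightarrow> (real^'n) \<times> (real^'n) \<Rightarrow> real" where
  "Et H Ec l h x = H x + (\<Sum>j=1..l. h ^ j * Ec j x)"

definition symplectic_integrator ::
  "((real^'n) \<times> (real^'n) \<Rightarrow> real) \<Rightarrow> ((real^'n) \<times> (real^'n) \<Rightarrow> real)
   \<Rightarrow> (real \<Rightarrow> real \<Rightarrow> (real^'n) \<times> (real^'n) \<Rightarrow> (real^'n) \<times> (real^'n)) \<Rightarrow> bool" where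
  "symplectic_integrator H N Psi \<longleftrightarrow>
     (\<forall>x0 E0. \<exists>C \<delta>. \<delta> > 0 \<and>
        (\<forall>h x E. 0 < h \<and> h < \<delta> \<and> dist x x0 < \<delta> \<and> \<bar>E - E0\<bar> < \<delta> \<longrightarrow>
           norm (Psi h E x - (x + h *\<^sub>R ham_field (\<lambda>w. N w * (H w - E)) x)) \<le> C * h\<^sup>2)) \<and>
     (\<forall>h E. 0 < h \<longrightarrow>
        (\<forall>x. Psi h E differentiable (at x) \<and>
             (\<forall>u v. symp_form (frechet_derivative (Psi h E) (at x) u)
                               (frechet_derivative (Psi h E) (at x) v) = symp_form u v)))"

definition is_modified_hamiltonian ::
  "((real^'n) \<times> (real^'n) \<Rightarrow> real) \<Rightarrow> ((real^'n) \<times> (real^'n) \<Rightarrow> real)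
   \<Rightarrow> (nat \<Rightarrow> (real^'n) \<times> (real^'n) \<Rightarrow> real \<Rightarrow> real)
   \<Rightarrow> (real \<Rightarrow> real \<Rightarrow> (real^'n) \<times> (real^'n) \<Rightarrow> (real^'n) \<times> (real^'n)) \<Rightarrow> bool" where
  "is_modified_hamiltonian H N K Psi \<longleftrightarrow>
     (\<forall>m x0 E0. \<exists>C \<delta>. \<delta> > 0 \<and>
        (\<forall>h x E t y. 0 < h \<and> h < \<delta> \<and> dist x x0 < \<delta> \<and> \<bar>E - E0\<bar> < \<delta> \<and>
            solves_on (ham_field (\<lambda>w. Kt H N K m h w E)) y {t..t+h} \<and> y t = x \<longrightarrow>
            norm (Psi h E x - y (t + h)) \<le> C * h ^ (m + 2)))"

text \<open>E = H + h E_1 + h^2 E_2 + ... solves K_mod(x;h,E(x;h)) = 0 as a formal power series in h: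
  for every order m, the Taylor coefficients of order 0..m at h = 0 of
  h \<mapsto> K^(m)_mod(x;h,E^(m)(x;h)) vanish (these coefficients only involve K_j, E_j with j \<le> m).\<close>
definition modified_conformal_hamiltonian ::
  "((real^'n) \<times> (real^'n) \<Rightarrow> real) \<Rightarrow> ((real^'n) \<times> (real^'n) \<Rightarrow> real)
   \<Rightarrow> (nat \<Rightarrow> (real^'n) \<times> (real^'n) \<Rightarrow> real \<Rightarrow> real)
   \<Rightarrow> (nat \<Rightarrow> (real^'n) \<times> (real^'n) \<Rightarrow> real) \<Rightarrow> bool" where
  "modified_conformal_hamiltonian H N K Ec \<longleftrightarrow>
     (\<forall>m k x. k \<le> m \<longrightarrow> (deriv ^^ k) (\<lambda>h. Kt H N K m h x (Et H Ec m h x)) 0 = 0)"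


definition Nmod :: "((real^'n) \<times> (real^'n) \<Rightarrow> real) \<Rightarrow> ((real^'n) \<times> (real^'n) \<Rightarrow> real)
   \<Rightarrow> (nat \<Rightarrow> (real^'n) \<times> (real^'n) \<Rightarrow> real \<Rightarrow> real) \<Rightarrow> (nat \<Rightarrow> (real^'n) \<times> (real^'n) \<Rightarrow> real)
   \<Rightarrow> nat \<Rightarrow> real \<Rightarrow> (real^'n) \<times> (real^'n) \<Rightarrow> real" where
  "Nmod H N K Ec l h x = - deriv (\<lambda>E. Kt H N K l h x E) (Et H Ec l h x)"

definition mod_field :: "((real^'n) \<times> (real^'n) \<Rightarrow> real) \<Rightarrow> ((real^'n) \<times> (real^'n) \<Rightarrow> real)
   \<Rightarrow> (nat \<Rightarrow> (real^'n) \<times> (real^'n) \<Rightarrow> real \<Rightarrow> real) \<Rightarrow> (nat \<Rightarrow> (real^'n) \<times> (real^'n) \<Rightarrow> real)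
   \<Rightarrow> nat \<Rightarrow> real \<Rightarrow> (real^'n) \<times> (real^'n) \<Rightarrow> (real^'n) \<times> (real^'n)" where
  "mod_field H N K Ec l h x =
     (- deriv (\<lambda>E. Kt H N K l h x E) (Et H Ec l h x) *\<^sub>R dp (Et H Ec l h) x,
      deriv (\<lambda>E. Kt H N K l h x E) (Et H Ec l h x) *\<^sub>R dq (Et H Ec l h) x)"

end

(* Put R(x, h) = K_mod^(l)(x; h, E^(l)(x; h)). The defining property of the E_j says that R and its
   first l derivatives in h vanish at h = 0; since mixed partial derivatives commute, the same holds
   for the spatial gradient of R, which is therefore O(h^(l+1)) locally uniformly. By the chain rule
   this gradient is the difference, on the level set E^(l) = E, between the Hamiltonian field of
   K_mod^(l)(.; h, E) and the field of the theorem. The latter is a multiple of the symplectic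
   gradient of E^(l), so it conserves E^(l): along its solutions the energy parameter stays frozen at
   E = E^(l)(x), a Gronwall estimate shows that over one step of length h the two flows drift apart
   by O(h^(l+2)), and the modified-Hamiltonian property of Psi_(h,E) for this frozen E gives the first
   claim. The second claim is -dK_mod^(l)/dE = N + O(h) > 0.
   All these uniform estimates need the E_j to be smooth. This follows by induction from
   (k+1)! N E_(k+1) = d^(k+1)/dh^(k+1) K_mod^(k+1)(x; h, E^(k)(x; h)) at h = 0,
   obtained by matching Taylor coefficients in h. *)

theory Submission
  imports Defs
begin

abbreviation fderiv :: "('a::real_normed_vector \<Rightarrow> 'b::real_normed_vector) \<Rightarrow> 'a \<Rightarrow> 'a \<Rightarrow> 'b"
  where "fderiv f x \<equiv> frechet_derivative f (at x)"

lemma fderiv_eqI: "(f has_derivative f') (at x) \<Longrightarrow> fderiv f x = f'"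
  using frechet_derivative_at by metis

lemma has_derivative_fderiv: "f differentiable (at x) \<Longrightarrow> (f has_derivative fderiv f x) (at x)"
  using frechet_derivative_works by blast

lemma linear_Pair_real_split:
  assumes "linear D"
  shows "D (a, b::real) = D (a, 0) + b *\<^sub>R D (0, 1)"
proof -
  have "D (a, b) = D ((a, 0) + b *\<^sub>R (0, 1))" by simp
  then show ?thesis using assms by (simp only: linear_add linear_scale)
qed

subsection \<open>Smooth functions\<close>

lemma Ck_Suc_imp_Ck: "Ck (Suc k) f \<Longrightarrow> Ck k f"
proof (induction k arbitrary: f)
  case 0
  then show ?case
    by (auto intro!: differentiable_imp_continuous_on simp: differentiable_on_def)
qed auto

lemma Ck_const: "Ck k (\<lambda>x. c)"
  by (induction k arbitrary: c) simp_all

lemma Ck_add: "Ck k f \<Longrightarrow> Ck k g \<Longrightarrow> Ck k (\<lambda>x. f x + g x)"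
proof (induction k arbitrary: f g)
  case 0 then show ?case by (auto intro!: continuous_intros)
next
  case (Suc k)
  have "fderiv (\<lambda>x. f x + g x) x = (\<lambda>v. fderiv f x v + fderiv g x v)" for x
    using Suc.prems by (intro fderiv_eqI) (auto intro!: derivative_eq_intros has_derivative_fderiv)
  with Suc show ?case by auto
qed

lemma Ck_mult: "Ck k f \<Longrightarrow> Ck k g \<Longrightarrow> Ck k (\<lambda>x. f x * g x)"
proof (induction k arbitrary: f g)
  case 0 then show ?case by (auto intro!: continuous_intros)
next
  case (Suc k)
  have "fderiv (\<lambda>x. f x * g x) x = (\<lambda>v. f x * fderiv g x v + fderiv f x v * g x)" for x
    using Suc.prems by (intro fderiv_eqI) (auto intro!: derivative_eq_intros has_derivative_fderiv)
  moreover have "Ck k (\<lambda>x. f x * fderiv g x v + fderiv f x v * g x)" for v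
    using Suc.prems Ck_Suc_imp_Ck[OF Suc.prems(1)] Ck_Suc_imp_Ck[OF Suc.prems(2)]
    by (intro Ck_add Suc.IH) auto
  ultimately show ?case using Suc.prems by auto
qed

lemma Ck_diff: "Ck k f \<Longrightarrow> Ck k g \<Longrightarrow> Ck k (\<lambda>x. f x - g x)"
  using Ck_add[of k f "\<lambda>x. (- 1) * g x"] Ck_mult[OF Ck_const, of k g "- 1"] by simp

lemma Ck_sum: "finite A \<Longrightarrow> (\<And>j. j \<in> A \<Longrightarrow> Ck k (f j)) \<Longrightarrow> Ck k (\<lambda>x. \<Sum>j\<in>A. f j x)"
  by (induction A rule: finite_induct) (simp_all add: Ck_const Ck_add)

lemma Ck_power: "Ck k f \<Longrightarrow> Ck k (\<lambda>x. f x ^ j)"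
  by (induction j) (simp_all add: Ck_const Ck_mult)

lemma Ck_linear: "linear (P :: 'a::euclidean_space \<Rightarrow> real) \<Longrightarrow> Ck k P"
proof (induction k)
  case 0 then show ?case by (simp add: linear_continuous_on linear_conv_bounded_linear)
next
  case (Suc k)
  have "fderiv P x = P" for x
    by (rule fderiv_eqI[OF linear_imp_has_derivative[OF Suc.prems]])
  with Suc.prems show ?case by (simp add: Ck_const linear_imp_differentiable)
qed

lemma Ck_inverse:
  assumes "\<And>x. f x \<noteq> (0::real)"
  shows "Ck k f \<Longrightarrow> Ck k (\<lambda>x. 1 / f x)"
proof (induction k)
  case 0 then show ?case using assms by (auto intro!: continuous_intros)
next
  case (Suc k)
  have d: "((\<lambda>x. 1 / f x) has_derivative (\<lambda>v. - fderiv f x v * (1 / f x) * (1 / f x))) (at x)" for x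
    using Suc.prems assms[of x]
    by (auto intro!: derivative_eq_intros has_derivative_fderiv simp: field_simps power2_eq_square)
  have "Ck k (\<lambda>x. (- 1) * fderiv f x v * (1 / f x) * (1 / f x))" for v
  proof -
    have "Ck k (\<lambda>x. 1 / f x)" "Ck k (\<lambda>x. fderiv f x v)"
      using Suc.IH[OF Ck_Suc_imp_Ck[OF Suc.prems]] Suc.prems by auto
    then show ?thesis by (intro Ck_mult Ck_const)
  qed
  moreover have "fderiv (\<lambda>x. 1 / f x) x = (\<lambda>v. (- 1) * fderiv f x v * (1 / f x) * (1 / f x))" for x
    using fderiv_eqI[OF d] by simp
  ultimately show ?case using d by (auto simp: differentiable_def)
qed

lemma Ck_compose_linear:
  fixes P :: "'a::euclidean_space \<Rightarrow> 'b::euclidean_space"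
  assumes "linear P"
  shows "Ck k f \<Longrightarrow> Ck k (\<lambda>x. f (P x))"
proof (induction k arbitrary: f)
  case 0
  have "continuous_on UNIV P" using assms by (simp add: linear_continuous_on linear_conv_bounded_linear)
  then show ?case using 0 continuous_on_compose2[of UNIV f UNIV P] by auto
next
  case (Suc k)
  have D: "((\<lambda>x. f (P x)) has_derivative (\<lambda>v. fderiv f (P x) (P v))) (at x)" for x
    using diff_chain_at[OF linear_imp_has_derivative[OF assms] has_derivative_fderiv[of f "P x"]] Suc.prems
    by (auto simp: o_def)
  moreover have "Ck k (\<lambda>x. fderiv f (P x) (P v))" for v
    using Suc.IH[of "\<lambda>y. fderiv f y (P v)"] Suc.prems by simp
  ultimately show ?case by (auto simp: differentiable_def fderiv_eqI[OF D])
qed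

lemma has_derivative_compose_Pair:
  fixes P :: "'a::euclidean_space \<Rightarrow> 'b::euclidean_space" and F :: "'b \<times> real \<Rightarrow> real"
  assumes "linear P" "F differentiable (at (P z, e z))" "e differentiable (at z)"
  shows "((\<lambda>z. F (P z, e z)) has_derivative (\<lambda>v. fderiv F (P z, e z) (P v, fderiv e z v))) (at z)"
proof -
  have "((\<lambda>z. (P z, e z)) has_derivative (\<lambda>v. (P v, fderiv e z v))) (at z)"
    using assms by (intro has_derivative_Pair linear_imp_has_derivative has_derivative_fderiv)
  from diff_chain_at[OF this has_derivative_fderiv[OF assms(2)]] show ?thesis by (simp add: o_def)
qed

lemma Ck_compose_Pair:
  fixes P :: "'a::euclidean_space \<Rightarrow> 'b::euclidean_space" and F :: "'b \<times> real \<Rightarrow> real"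
  assumes "linear P"
  shows "Ck k F \<Longrightarrow> Ck k e \<Longrightarrow> Ck k (\<lambda>z. F (P z, e z))"
proof (induction k arbitrary: F e)
  case 0
  have "continuous_on UNIV P" using assms by (simp add: linear_continuous_on linear_conv_bounded_linear)
  then have "continuous_on UNIV (\<lambda>z. (P z, e z))" using 0 by (auto intro!: continuous_intros)
  then show ?case using 0 continuous_on_compose2[of UNIV F UNIV "\<lambda>z. (P z, e z)"] by auto
next
  case (Suc k)
  have D: "((\<lambda>z. F (P z, e z)) has_derivative (\<lambda>v. fderiv F (P z, e z) (P v, fderiv e z v))) (at z)" for z
    using Suc.prems by (intro has_derivative_compose_Pair assms) auto
  have split: "fderiv F (P z, e z) (P v, fderiv e z v)
      = fderiv F (P z, e z) (P v, 0) + fderiv e z v * fderiv F (P z, e z) (0, 1)" for z v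
    using Suc.prems by (subst linear_Pair_real_split) (auto intro: linear_frechet_derivative)
  have "Ck k (\<lambda>z. fderiv F (P z, e z) (P v, 0) + fderiv e z v * fderiv F (P z, e z) (0, 1))" for v
    using Suc.prems Suc.IH[of "\<lambda>y. fderiv F y (P v, 0)" e] Suc.IH[of "\<lambda>y. fderiv F y (0, 1)" e]
      Ck_Suc_imp_Ck[of k e]
    by (intro Ck_add Ck_mult) auto
  with D show ?case by (auto simp: differentiable_def fderiv_eqI[OF D] split)
qed

lemma smooth_Ck: "smooth f \<Longrightarrow> Ck k f"
  by (simp add: smooth_def)

lemma smooth_differentiable: "smooth f \<Longrightarrow> f differentiable (at x)"
  using smooth_Ck[of f 1] by auto

lemma smooth_fderiv: "smooth f \<Longrightarrow> smooth (\<lambda>x. fderiv f x v)"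
  unfolding smooth_def by (metis Ck.simps(2))

lemma smooth_continuous_on: "smooth f \<Longrightarrow> continuous_on S f"
  using smooth_Ck[of f 0] continuous_on_subset by auto

lemma smooth_isCont: "smooth f \<Longrightarrow> isCont f x"
  using smooth_Ck[of f 0] continuous_on_eq_continuous_at[of UNIV f] by auto

lemma smooth_const: "smooth (\<lambda>x. c)"
  by (simp add: smooth_def Ck_const)

lemma smooth_add: "smooth f \<Longrightarrow> smooth g \<Longrightarrow> smooth (\<lambda>x. f x + g x)"
  by (simp add: smooth_def Ck_add)

lemma smooth_diff: "smooth f \<Longrightarrow> smooth g \<Longrightarrow> smooth (\<lambda>x. f x - g x)"
  by (simp add: smooth_def Ck_diff)

lemma smooth_minus: "smooth f \<Longrightarrow> smooth (\<lambda>x. - f x)"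
  using smooth_diff[OF smooth_const, of f 0] by simp

lemma smooth_mult: "smooth f \<Longrightarrow> smooth g \<Longrightarrow> smooth (\<lambda>x. f x * g x)"
  by (simp add: smooth_def Ck_mult)

lemma smooth_power: "smooth f \<Longrightarrow> smooth (\<lambda>x. f x ^ j)"
  by (simp add: smooth_def Ck_power)

lemma smooth_sum: "finite A \<Longrightarrow> (\<And>j. j \<in> A \<Longrightarrow> smooth (f j)) \<Longrightarrow> smooth (\<lambda>x. \<Sum>j\<in>A. f j x)"
  by (simp add: smooth_def Ck_sum)

lemma smooth_linear: "linear (P :: 'a::euclidean_space \<Rightarrow> real) \<Longrightarrow> smooth P"
  by (simp add: smooth_def Ck_linear)

lemma smooth_inverse: "(\<And>x. f x \<noteq> 0) \<Longrightarrow> smooth f \<Longrightarrow> smooth (\<lambda>x. 1 / f x)"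
  by (simp add: smooth_def Ck_inverse)

lemma smooth_compose_linear:
  "linear (P :: 'a::euclidean_space \<Rightarrow> 'b::euclidean_space) \<Longrightarrow> smooth f \<Longrightarrow> smooth (\<lambda>x. f (P x))"
  by (simp add: smooth_def Ck_compose_linear)

lemma smooth_compose_Pair:
  fixes P :: "'a::euclidean_space \<Rightarrow> 'b::euclidean_space" and F :: "'b \<times> real \<Rightarrow> real"
  shows "linear P \<Longrightarrow> smooth F \<Longrightarrow> smooth e \<Longrightarrow> smooth (\<lambda>z. F (P z, e z))"
  by (simp add: smooth_def Ck_compose_Pair)

lemma smooth_compose_fst: "smooth f \<Longrightarrow> smooth (\<lambda>z. f (fst z))"
  by (rule smooth_compose_linear[OF linear_fst])

lemma smooth_snd: "smooth (\<lambda>z::'a::euclidean_space \<times> real. snd z)"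
  by (intro smooth_linear linear_snd)

lemmas smooth_intros = smooth_const smooth_add smooth_diff smooth_mult smooth_power smooth_sum
  smooth_compose_fst smooth_snd

subsection \<open>Directional derivatives\<close>

lemma has_real_derivative_along_line:
  fixes G :: "'a::real_normed_vector \<Rightarrow> real"
  assumes "G differentiable (at (p + t *\<^sub>R v))"
  shows "((\<lambda>t. G (p + t *\<^sub>R v)) has_real_derivative fderiv G (p + t *\<^sub>R v) v) (at t)"
proof -
  have "((\<lambda>t. p + t *\<^sub>R v) has_derivative (\<lambda>s. s *\<^sub>R v)) (at t)"
    by (auto intro!: derivative_eq_intros)
  from diff_chain_at[OF this has_derivative_fderiv[OF assms]]
  have "((\<lambda>t. G (p + t *\<^sub>R v)) has_derivative (\<lambda>s. fderiv G (p + t *\<^sub>R v) (s *\<^sub>R v))) (at t)"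
    by (simp add: o_def)
  moreover have "(\<lambda>s. fderiv G (p + t *\<^sub>R v) (s *\<^sub>R v)) = (*) (fderiv G (p + t *\<^sub>R v) v)"
    using linear_frechet_derivative[OF assms] by (simp add: linear_scale fun_eq_iff mult.commute)
  ultimately show ?thesis
    by (simp add: has_field_derivative_def)
qed

lemma fderiv_eq_line_derivative:
  fixes F :: "'a::real_normed_vector \<Rightarrow> real"
  assumes "F differentiable (at p)"
    and "((\<lambda>t. F (p + t *\<^sub>R v)) has_real_derivative D) (at 0)"
  shows "fderiv F p v = D"
  using has_real_derivative_along_line[of F p 0 v] assms DERIV_unique by fastforce

lemma has_derivative_compose_affine:
  fixes F :: "'b::real_normed_vector \<Rightarrow> real" and P :: "'a::euclidean_space \<Rightarrow> 'b"
  assumes "F differentiable (at (c + P w))" and "linear P"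
  shows "((\<lambda>w. F (c + P w)) has_derivative (\<lambda>u. fderiv F (c + P w) (P u))) (at w)"
proof -
  have "((\<lambda>w. c + P w) has_derivative P) (at w)"
    using has_derivative_add[OF has_derivative_const linear_imp_has_derivative[OF assms(2)]] by simp
  from diff_chain_at[OF this has_derivative_fderiv[OF assms(1)]] show ?thesis by (simp add: o_def)
qed

lemma fderiv_compose_affine:
  fixes F :: "'b::real_normed_vector \<Rightarrow> real" and P :: "'a::euclidean_space \<Rightarrow> 'b"
  assumes "F differentiable (at (c + P w))" and "linear P"
  shows "fderiv (\<lambda>w. F (c + P w)) w u = fderiv F (c + P w) (P u)"
  using fderiv_eqI[OF has_derivative_compose_affine[OF assms]] by simp

lemma linear_cart_expansion:
  fixes f :: "real^'n \<Rightarrow> real"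
  assumes "linear f"
  shows "f a = (\<chi> i. f (axis i 1)) \<bullet> a"
proof -
  have "f a = f (\<Sum>i\<in>UNIV. a $ i *\<^sub>R axis i 1)"
    using basis_expansion[of a] by (simp add: scalar_mult_eq_scaleR)
  also have "\<dots> = (\<Sum>i\<in>UNIV. a $ i * f (axis i 1))"
    using assms by (simp add: linear_sum linear_scale)
  finally show ?thesis by (simp add: inner_vec_def mult.commute)
qed

lemma fderiv_cart_Pair:
  fixes F :: "(real^'n) \<times> (real^'n) \<Rightarrow> real"
  assumes "F differentiable (at w)"
  shows "fderiv F w (a, b) = dq F w \<bullet> a + dp F w \<bullet> b"
proof -
  have lin: "linear (fderiv F w)" using assms by (rule linear_frechet_derivative)
  have l1: "linear (\<lambda>x. fderiv F w (x, 0))" and l2: "linear (\<lambda>x. fderiv F w (0, x))"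
    using linear_compose[OF _ lin, of "\<lambda>x::real^'n. (x, 0::real^'n)"]
      linear_compose[OF _ lin, of "\<lambda>x::real^'n. (0::real^'n, x)"]
    by (simp_all add: o_def linear_iff)
  have "fderiv F w (a, 0) = dq F w \<bullet> a" "fderiv F w (0, b) = dp F w \<bullet> b"
    using linear_cart_expansion[OF l1, of a] linear_cart_expansion[OF l2, of b]
    unfolding dq_def dp_def by simp_all
  moreover have "fderiv F w (a, b) = fderiv F w (a, 0) + fderiv F w (0, b)"
    using linear_add[OF lin, of "(a, 0)" "(0, b)"] by simp
  ultimately show ?thesis by simp
qed

subsection \<open>Symmetry of second derivatives\<close>

lemma second_difference_mean_value:
  fixes F :: "'a::euclidean_space \<Rightarrow> real"
  assumes F: "smooth F" and s: "s > 0"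
  shows "\<exists>a b. 0 < a \<and> a < s \<and> 0 < b \<and> b < s \<and>
    F (z + s *\<^sub>R u + s *\<^sub>R w) - F (z + s *\<^sub>R u) - F (z + s *\<^sub>R w) + F z
      = s * s * fderiv (\<lambda>z. fderiv F z u) (z + a *\<^sub>R u + b *\<^sub>R w) w"
proof -
  define Fu where "Fu = (\<lambda>z. fderiv F z u)"
  define g where "g a = F ((z + s *\<^sub>R w) + a *\<^sub>R u) - F (z + a *\<^sub>R u)" for a
  have "DERIV g a :> Fu ((z + s *\<^sub>R w) + a *\<^sub>R u) - Fu (z + a *\<^sub>R u)" for a
    unfolding g_def Fu_def
    by (intro DERIV_diff has_real_derivative_along_line smooth_differentiable F)
  from MVT2[OF s this] obtain a where a: "0 < a" "a < s"
    and ga: "g s - g 0 = s * (Fu ((z + s *\<^sub>R w) + a *\<^sub>R u) - Fu (z + a *\<^sub>R u))" by auto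
  define k where "k b = Fu ((z + a *\<^sub>R u) + b *\<^sub>R w)" for b
  have "DERIV k b :> fderiv Fu ((z + a *\<^sub>R u) + b *\<^sub>R w) w" for b
    unfolding k_def Fu_def
    by (intro has_real_derivative_along_line smooth_differentiable smooth_fderiv F)
  from MVT2[OF s this] obtain b where b: "0 < b" "b < s"
    and kb: "k s - k 0 = s * fderiv Fu ((z + a *\<^sub>R u) + b *\<^sub>R w) w" by auto
  have "F (z + s *\<^sub>R u + s *\<^sub>R w) - F (z + s *\<^sub>R u) - F (z + s *\<^sub>R w) + F z = g s - g 0"
    unfolding g_def by (simp add: algebra_simps)
  also have "\<dots> = s * (k s - k 0)" using ga unfolding k_def by (simp add: algebra_simps)
  also have "\<dots> = s * s * fderiv Fu (z + a *\<^sub>R u + b *\<^sub>R w) w" using kb by simp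
  finally show ?thesis using a b unfolding Fu_def by blast
qed

lemma isCont_eq_if_values_meet_nearby:
  fixes f g :: "'a::metric_space \<Rightarrow> real"
  assumes "isCont f z" "isCont g z"
    and meet: "\<And>e. e > 0 \<Longrightarrow> \<exists>p q. dist p z < e \<and> dist q z < e \<and> f p = g q"
  shows "f z = g z"
proof (rule ccontr)
  assume "f z \<noteq> g z"
  then have d: "\<bar>f z - g z\<bar> / 2 > 0" by simp
  obtain r1 where r1: "r1 > 0" "\<And>p. dist p z < r1 \<Longrightarrow> dist (f p) (f z) < \<bar>f z - g z\<bar> / 2"
    using assms(1)[unfolded continuous_at_eps_delta] d by blast
  obtain r2 where r2: "r2 > 0" "\<And>q. dist q z < r2 \<Longrightarrow> dist (g q) (g z) < \<bar>f z - g z\<bar> / 2"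
    using assms(2)[unfolded continuous_at_eps_delta] d by blast
  obtain p q where "dist p z < min r1 r2" "dist q z < min r1 r2" "f p = g q"
    using meet[of "min r1 r2"] r1 r2 by auto
  with r1(2)[of p] r2(2)[of q] show False by (simp add: dist_real_def) (smt (verit))
qed

theorem fderiv_fderiv_commute:
  fixes F :: "'a::euclidean_space \<Rightarrow> real"
  assumes F: "smooth F"
  shows "fderiv (\<lambda>z. fderiv F z u) z w = fderiv (\<lambda>z. fderiv F z w) z u"
proof (rule isCont_eq_if_values_meet_nearby[where f = "\<lambda>z. fderiv (\<lambda>z. fderiv F z u) z w"
      and g = "\<lambda>z. fderiv (\<lambda>z. fderiv F z w) z u"])
  show "isCont (\<lambda>z. fderiv (\<lambda>z. fderiv F z u) z w) z" "isCont (\<lambda>z. fderiv (\<lambda>z. fderiv F z w) z u) z"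
    using F by (simp_all add: smooth_isCont smooth_fderiv)
  fix e :: real assume e: "e > 0"
  define s where "s = e / (norm u + norm w + 1)"
  have s: "s > 0" unfolding s_def using e by (simp add: add_nonneg_pos)
  have near: "dist (z + a *\<^sub>R u + b *\<^sub>R w) z < e" if "0 < a" "a < s" "0 < b" "b < s" for a b
  proof -
    have "dist (z + a *\<^sub>R u + b *\<^sub>R w) z \<le> a * norm u + b * norm w"
      using that norm_triangle_ineq[of "a *\<^sub>R u" "b *\<^sub>R w"] by (simp add: dist_norm)
    also have "\<dots> \<le> s * (norm u + norm w)"
      using that by (simp add: distrib_left add_mono mult_right_mono)
    also have "\<dots> < s * (norm u + norm w + 1)"
      using s by simp
    also have "\<dots> = e"
      unfolding s_def by (simp add: add_nonneg_eq_0_iff)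
    finally show ?thesis .
  qed
  obtain a b where ab: "0 < a" "a < s" "0 < b" "b < s"
    and 1: "F (z + s *\<^sub>R u + s *\<^sub>R w) - F (z + s *\<^sub>R u) - F (z + s *\<^sub>R w) + F z
      = s * s * fderiv (\<lambda>z. fderiv F z u) (z + a *\<^sub>R u + b *\<^sub>R w) w"
    using second_difference_mean_value[OF F s] by blast
  obtain a' b' where ab': "0 < a'" "a' < s" "0 < b'" "b' < s"
    and 2: "F (z + s *\<^sub>R w + s *\<^sub>R u) - F (z + s *\<^sub>R w) - F (z + s *\<^sub>R u) + F z
      = s * s * fderiv (\<lambda>z. fderiv F z w) (z + a' *\<^sub>R w + b' *\<^sub>R u) u"
    using second_difference_mean_value[OF F s] by blast
  have "fderiv (\<lambda>z. fderiv F z u) (z + a *\<^sub>R u + b *\<^sub>R w) w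
      = fderiv (\<lambda>z. fderiv F z w) (z + b' *\<^sub>R u + a' *\<^sub>R w) u"
    using 1 2 s by (simp add: algebra_simps)
  then show "\<exists>p q. dist p z < e \<and> dist q z < e \<and>
      fderiv (\<lambda>z. fderiv F z u) p w = fderiv (\<lambda>z. fderiv F z w) q u"
    using near[OF ab] near[of b' a'] ab' by blast
qed

subsection \<open>Taylor expansion in the last variable\<close>

definition partial_snd :: "('a::euclidean_space \<times> real \<Rightarrow> real) \<Rightarrow> 'a \<times> real \<Rightarrow> real" where
  "partial_snd F = (\<lambda>z. fderiv F z (0, 1))"

lemma smooth_partial_snd_funpow: "smooth F \<Longrightarrow> smooth ((partial_snd ^^ i) F)"
  by (induction i) (auto simp: partial_snd_def intro: smooth_fderiv)

lemma has_real_derivative_partial_snd: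
  assumes "smooth F"
  shows "((\<lambda>s. F (x, s)) has_real_derivative partial_snd F (x, s)) (at s)"
  using has_real_derivative_along_line[of F "(x, 0)" s "(0, 1)"] smooth_differentiable[OF assms]
  by (simp add: partial_snd_def)

lemma deriv_funpow_slice:
  assumes "smooth F"
  shows "(deriv ^^ i) (\<lambda>s. F (x, s)) = (\<lambda>s. (partial_snd ^^ i) F (x, s))"
proof (induction i)
  case (Suc i)
  have "deriv (\<lambda>s. (partial_snd ^^ i) F (x, s)) = (\<lambda>s. partial_snd ((partial_snd ^^ i) F) (x, s))"
    using has_real_derivative_partial_snd[OF smooth_partial_snd_funpow[OF assms]] DERIV_imp_deriv
    by blast
  with Suc show ?case by simp
qed simp

lemma partial_snd_funpow_fderiv:
  assumes "smooth F"
  shows "(partial_snd ^^ i) (\<lambda>z. fderiv F z u) = (\<lambda>z. fderiv ((partial_snd ^^ i) F) z u)"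
proof (induction i)
  case (Suc i)
  define G where "G = (partial_snd ^^ i) F"
  have G: "smooth G" unfolding G_def using assms by (rule smooth_partial_snd_funpow)
  have "(partial_snd ^^ Suc i) (\<lambda>z. fderiv F z u) = partial_snd (\<lambda>z. fderiv G z u)"
    using Suc by (simp add: G_def)
  also have "\<dots> = (\<lambda>z. fderiv (\<lambda>z. fderiv G z (0, 1)) z u)"
    using fderiv_fderiv_commute[OF G] by (simp add: partial_snd_def)
  also have "\<dots> = (\<lambda>z. fderiv ((partial_snd ^^ Suc i) F) z u)"
    by (simp add: G_def partial_snd_def)
  finally show ?case .
qed simp

lemma fderiv_horizontal_eq_0:
  fixes G :: "'a::euclidean_space \<times> real \<Rightarrow> real"
  assumes "G differentiable (at (x, 0))" "\<And>x. G (x, 0) = 0"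
  shows "fderiv G (x, 0) (u, 0) = 0"
proof (rule fderiv_eq_line_derivative[OF assms(1)])
  show "((\<lambda>t. G ((x, 0) + t *\<^sub>R (u, 0))) has_real_derivative 0) (at 0)"
    using assms(2) by simp
qed

lemma continuous_on_compact_abs_bound:
  fixes f :: "'a::metric_space \<Rightarrow> real"
  assumes "compact S" "continuous_on S f"
  shows "\<exists>B. \<forall>z\<in>S. \<bar>f z\<bar> \<le> B"
  using compact_imp_bounded[OF compact_continuous_image[OF assms(2,1)]] by (auto simp: bounded_iff)

lemma taylor_snd_remainder_bound:
  fixes F :: "'a::euclidean_space \<times> real \<Rightarrow> real"
  assumes F: "smooth F" and S: "compact S" and n: "n > 0"
  shows "\<exists>M. \<forall>x\<in>S. \<forall>h. 0 \<le> h \<and> h \<le> \<delta> \<longrightarrow>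
           \<bar>F (x, h) - (\<Sum>i<n. (partial_snd ^^ i) F (x, 0) / fact i * h ^ i)\<bar> \<le> M * h ^ n"
proof -
  have "compact (S \<times> {0..\<delta>})" using S by (intro compact_Times) auto
  from continuous_on_compact_abs_bound[OF this smooth_continuous_on[OF smooth_partial_snd_funpow[OF F]]]
  obtain B where B: "\<And>z. z \<in> S \<times> {0..\<delta>} \<Longrightarrow> \<bar>(partial_snd ^^ n) F z\<bar> \<le> B"
    by blast
  have "\<bar>F (x, h) - (\<Sum>i<n. (partial_snd ^^ i) F (x, 0) / fact i * h ^ i)\<bar> \<le> B / fact n * h ^ n"
    if x: "x \<in> S" and h: "0 \<le> h" "h \<le> \<delta>" for x h
  proof (cases "h = 0")
    case True
    then show ?thesis using n by (simp add: zero_power)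
  next
    case False
    then have hp: "0 < h" using h by simp
    have "\<forall>m t. m < n \<and> 0 \<le> t \<and> t \<le> h \<longrightarrow>
        ((\<lambda>s. (partial_snd ^^ m) F (x, s)) has_real_derivative (partial_snd ^^ Suc m) F (x, t)) (at t)"
      using has_real_derivative_partial_snd[OF smooth_partial_snd_funpow[OF F]] by simp
    from Maclaurin[of h n "\<lambda>m s. (partial_snd ^^ m) F (x, s)" "\<lambda>s. F (x, s)", OF hp n _ this] obtain t where t: "0 < t" "t < h"
      and eq: "F (x, h) = (\<Sum>m<n. (partial_snd ^^ m) F (x, 0) / fact m * h ^ m)
                 + (partial_snd ^^ n) F (x, t) / fact n * h ^ n"
      by auto
    have "\<bar>(partial_snd ^^ n) F (x, t) / fact n * h ^ n\<bar>
        = \<bar>(partial_snd ^^ n) F (x, t)\<bar> / fact n * h ^ n"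
      using hp by (simp add: abs_mult)
    also have "\<dots> \<le> B / fact n * h ^ n"
      using B[of "(x, t)"] x t h by (intro mult_right_mono divide_right_mono) auto
    finally show ?thesis using eq by simp
  qed
  then show ?thesis by blast
qed

lemma power_expansion_small_imp_coeffs_zero:
  fixes d :: "nat \<Rightarrow> real"
  assumes "\<delta> > 0" "\<forall>h. 0 < h \<and> h < \<delta> \<longrightarrow> \<bar>\<Sum>i<n. d i * h ^ i\<bar> \<le> M * h ^ n"
  shows "\<forall>i<n. d i = 0"
  using assms(2)
proof (induction n arbitrary: d M)
  case (Suc n)
  let ?P = "\<lambda>h. \<Sum>i<Suc n. d i * h ^ i"
  have "((\<lambda>h. \<bar>?P h\<bar>) \<longlongrightarrow> \<bar>?P 0\<bar>) (at_right 0)"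
    by (intro tendsto_intros)
  then have lower: "((\<lambda>h. \<bar>?P h\<bar>) \<longlongrightarrow> \<bar>d 0\<bar>) (at_right 0)" by simp
  have upper: "((\<lambda>h. M * h ^ Suc n) \<longlongrightarrow> M * 0 ^ Suc n) (at_right (0::real))"
    by (intro tendsto_intros)
  have "eventually (\<lambda>h. \<bar>?P h\<bar> \<le> M * h ^ Suc n) (at_right 0)"
    unfolding eventually_at_right_field using assms(1) Suc.prems by blast
  from tendsto_le[OF _ upper lower this] have d0: "d 0 = 0" by simp
  have "\<bar>\<Sum>i<n. d (Suc i) * h ^ i\<bar> \<le> M * h ^ n" if h: "0 < h" "h < \<delta>" for h
  proof -
    have "?P h = h * (\<Sum>i<n. d (Suc i) * h ^ i)"
      using d0 by (simp add: sum.lessThan_Suc_shift sum_distrib_left algebra_simps del: sum.lessThan_Suc)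
    moreover have "\<bar>?P h\<bar> \<le> M * h ^ Suc n" using Suc.prems h by blast
    ultimately have "h * \<bar>\<Sum>i<n. d (Suc i) * h ^ i\<bar> \<le> h * (M * h ^ n)"
      using h by (simp only: abs_mult power_Suc) (simp add: ac_simps)
    then show ?thesis using h by simp
  qed
  then have "\<forall>i<n. d (Suc i) = 0" using Suc.IH[of "\<lambda>i. d (Suc i)" M] by blast
  then show ?case using d0 by (metis less_Suc_eq_0_disj)
qed simp

lemma partial_snd_funpow_diff_from_estimate:
  fixes F G :: "'a::euclidean_space \<times> real \<Rightarrow> real"
  assumes F: "smooth F" and G: "smooth G"
    and est: "\<forall>h. 0 < h \<and> h < 1 \<longrightarrow> \<bar>F (x, h) - G (x, h) - a * h ^ m\<bar> \<le> C * h ^ Suc m"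
  shows "(partial_snd ^^ m) F (x, 0) - (partial_snd ^^ m) G (x, 0) = fact m * a"
proof -
  obtain MF where MF: "\<forall>h. 0 \<le> h \<and> h \<le> 1 \<longrightarrow>
      \<bar>F (x, h) - (\<Sum>i<Suc m. (partial_snd ^^ i) F (x, 0) / fact i * h ^ i)\<bar> \<le> MF * h ^ Suc m"
    using taylor_snd_remainder_bound[OF F, of "{x}" "Suc m" 1] by auto
  obtain MG where MG: "\<forall>h. 0 \<le> h \<and> h \<le> 1 \<longrightarrow>
      \<bar>G (x, h) - (\<Sum>i<Suc m. (partial_snd ^^ i) G (x, 0) / fact i * h ^ i)\<bar> \<le> MG * h ^ Suc m"
    using taylor_snd_remainder_bound[OF G, of "{x}" "Suc m" 1] by auto
  define d where "d i = (partial_snd ^^ i) F (x, 0) / fact i - (partial_snd ^^ i) G (x, 0) / fact i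
      - (if i = m then a else 0)" for i
  have "\<bar>\<Sum>i<Suc m. d i * h ^ i\<bar> \<le> (MF + MG + C) * h ^ Suc m" if h: "0 < h" "h < 1" for h
  proof -
    have "(\<Sum>i<Suc m. d i * h ^ i)
        = (\<Sum>i<Suc m. (partial_snd ^^ i) F (x, 0) / fact i * h ^ i)
          - (\<Sum>i<Suc m. (partial_snd ^^ i) G (x, 0) / fact i * h ^ i) - a * h ^ m"
      by (simp add: d_def algebra_simps sum.distrib sum_subtractf)
    moreover have "\<bar>F (x, h) - (\<Sum>i<Suc m. (partial_snd ^^ i) F (x, 0) / fact i * h ^ i)\<bar> \<le> MF * h ^ Suc m"
      "\<bar>G (x, h) - (\<Sum>i<Suc m. (partial_snd ^^ i) G (x, 0) / fact i * h ^ i)\<bar> \<le> MG * h ^ Suc m"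
      "\<bar>F (x, h) - G (x, h) - a * h ^ m\<bar> \<le> C * h ^ Suc m"
      using MF MG est h by auto
    ultimately show ?thesis by (simp add: algebra_simps)
  qed
  then have "\<forall>h. 0 < h \<and> h < 1 \<longrightarrow> \<bar>\<Sum>i<Suc m. d i * h ^ i\<bar> \<le> (MF + MG + C) * h ^ Suc m"
    by blast
  from power_expansion_small_imp_coeffs_zero[OF zero_less_one this] have "d m = 0" by simp
  then show ?thesis by (simp add: d_def field_simps)
qed

subsection \<open>Uniform estimates on compact sets\<close>

lemma smooth_abs_bound:
  fixes f :: "'a::euclidean_space \<Rightarrow> real"
  assumes "smooth f" "compact S"
  shows "\<exists>B. \<forall>z\<in>S. \<bar>f z\<bar> \<le> B"
  using continuous_on_compact_abs_bound[OF assms(2) smooth_continuous_on[OF assms(1)]] .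

lemma onorm_le_sum_Basis:
  fixes g :: "'a::euclidean_space \<Rightarrow> real"
  assumes "linear g"
  shows "onorm g \<le> (\<Sum>b\<in>Basis. \<bar>g b\<bar>)"
proof (rule onorm_le)
  fix v :: 'a
  have "g v = g (\<Sum>b\<in>Basis. (v \<bullet> b) *\<^sub>R b)" by (simp add: euclidean_representation)
  also have "\<dots> = (\<Sum>b\<in>Basis. (v \<bullet> b) * g b)"
    using assms by (simp add: linear_sum linear_scale)
  finally have "\<bar>g v\<bar> \<le> (\<Sum>b\<in>Basis. \<bar>v \<bullet> b\<bar> * \<bar>g b\<bar>)"
    by (simp add: abs_mult[symmetric] sum_abs)
  also have "\<dots> \<le> (\<Sum>b\<in>Basis. norm v * \<bar>g b\<bar>)"
    by (intro sum_mono mult_right_mono) (auto simp: Basis_le_norm)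
  finally show "norm (g v) \<le> (\<Sum>b\<in>Basis. \<bar>g b\<bar>) * norm v"
    by (simp add: sum_distrib_left mult.commute)
qed

lemma smooth_lipschitz_on_compact_convex:
  fixes f :: "'a::euclidean_space \<Rightarrow> real"
  assumes f: "smooth f" and S: "compact S" "convex S"
  shows "\<exists>L. \<forall>a\<in>S. \<forall>b\<in>S. \<bar>f a - f b\<bar> \<le> L * norm (a - b)"
proof -
  have "continuous_on S (\<lambda>x. \<Sum>b\<in>Basis. \<bar>fderiv f x b\<bar>)"
    using smooth_continuous_on[OF smooth_fderiv[OF f]] by (intro continuous_intros) auto
  from continuous_on_compact_abs_bound[OF S(1) this]
  obtain B where B: "\<And>x. x \<in> S \<Longrightarrow> \<bar>\<Sum>b\<in>Basis. \<bar>fderiv f x b\<bar>\<bar> \<le> B"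
    by blast
  have "norm (f a - f b) \<le> B * norm (a - b)" if "a \<in> S" "b \<in> S" for a b
  proof (rule differentiable_bound[OF S(2) _ _ that])
    fix x assume "x \<in> S"
    show "(f has_derivative fderiv f x) (at x within S)"
      using has_derivative_fderiv[OF smooth_differentiable[OF f]] has_derivative_at_withinI by blast
    have "onorm (fderiv f x) \<le> (\<Sum>b\<in>Basis. \<bar>fderiv f x b\<bar>)"
      by (rule onorm_le_sum_Basis[OF linear_frechet_derivative[OF smooth_differentiable[OF f]]])
    then show "onorm (fderiv f x) \<le> B" using B[OF \<open>x \<in> S\<close>] by simp
  qed
  then show ?thesis by auto
qed

lemma norm_cart_Pair_le_sum:
  fixes p q :: "real^'n"
  shows "norm (p, q) \<le> (\<Sum>i\<in>UNIV. \<bar>p $ i\<bar>) + (\<Sum>i\<in>UNIV. \<bar>q $ i\<bar>)"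
  using norm_Pair_le[of p q] norm_le_l1_cart[of p] norm_le_l1_cart[of q] by linarith

lemma smooth_family_uniform_lipschitz_bound:
  fixes g :: "'i \<Rightarrow> 'a::euclidean_space \<Rightarrow> real"
  assumes "finite I" and "\<And>i. i \<in> I \<Longrightarrow> smooth (g i)" and Q: "compact Q" "convex Q"
  shows "\<exists>L M. 0 \<le> L \<and> 0 \<le> M \<and>
    (\<forall>i\<in>I. \<forall>a\<in>Q. \<forall>b\<in>Q. \<bar>g i a - g i b\<bar> \<le> L * norm (a - b) \<and> \<bar>g i a\<bar> \<le> M)"
  using assms(1,2)
proof (induction I rule: finite_induct)
  case empty
  show ?case by (intro exI[of _ 0]) simp
next
  case (insert j I)
  obtain L M where LM: "0 \<le> L" "0 \<le> M"
    "\<forall>i\<in>I. \<forall>a\<in>Q. \<forall>b\<in>Q. \<bar>g i a - g i b\<bar> \<le> L * norm (a - b) \<and> \<bar>g i a\<bar> \<le> M"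
    using insert by auto
  have gj: "smooth (g j)" using insert.prems by simp
  obtain Lj where Lj: "\<forall>a\<in>Q. \<forall>b\<in>Q. \<bar>g j a - g j b\<bar> \<le> Lj * norm (a - b)"
    using smooth_lipschitz_on_compact_convex[OF gj Q] by blast
  obtain Mj where Mj: "\<forall>a\<in>Q. \<bar>g j a\<bar> \<le> Mj"
    using smooth_abs_bound[OF gj Q(1)] by blast
  have "\<bar>g i a - g i b\<bar> \<le> max L \<bar>Lj\<bar> * norm (a - b) \<and> \<bar>g i a\<bar> \<le> max M \<bar>Mj\<bar>"
    if "i \<in> insert j I" "a \<in> Q" "b \<in> Q" for i a b
  proof -
    have "L * norm (a - b) \<le> max L \<bar>Lj\<bar> * norm (a - b)" "Lj * norm (a - b) \<le> max L \<bar>Lj\<bar> * norm (a - b)"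
      by (intro mult_right_mono; simp)+
    moreover have "M \<le> max M \<bar>Mj\<bar>" "Mj \<le> max M \<bar>Mj\<bar>" by simp_all
    moreover have "\<bar>g i a - g i b\<bar> \<le> Lj * norm (a - b) \<and> \<bar>g i a\<bar> \<le> Mj
        \<or> \<bar>g i a - g i b\<bar> \<le> L * norm (a - b) \<and> \<bar>g i a\<bar> \<le> M"
      using that LM(3) Lj Mj by (cases "i = j") auto
    ultimately show ?thesis by linarith
  qed
  then show ?case using LM(1,2) by (intro exI[of _ "max L \<bar>Lj\<bar>"] exI[of _ "max M \<bar>Mj\<bar>"]) auto
qed

lemma cart_Pair_smooth_lipschitz_bound:
  fixes f :: "'a::euclidean_space \<Rightarrow> (real^'n) \<times> (real^'n)"
  assumes sq: "\<And>i. smooth (\<lambda>y. fst (f y) $ i)" and sp: "\<And>i. smooth (\<lambda>y. snd (f y) $ i)"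
    and Q: "compact Q" "convex Q"
  shows "\<exists>L M. 0 \<le> L \<and> 0 \<le> M \<and>
    (\<forall>a\<in>Q. \<forall>b\<in>Q. norm (f a - f b) \<le> L * norm (a - b) \<and> norm (f a) \<le> M)"
proof -
  obtain L1 M1 where LM1: "0 \<le> L1" "0 \<le> M1" "\<forall>i. \<forall>a\<in>Q. \<forall>b\<in>Q.
      \<bar>fst (f a) $ i - fst (f b) $ i\<bar> \<le> L1 * norm (a - b) \<and> \<bar>fst (f a) $ i\<bar> \<le> M1"
    using smooth_family_uniform_lipschitz_bound[of "UNIV :: 'n set" "\<lambda>i y. fst (f y) $ i" Q] sq Q
    by auto
  obtain L2 M2 where LM2: "0 \<le> L2" "0 \<le> M2" "\<forall>i. \<forall>a\<in>Q. \<forall>b\<in>Q.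
      \<bar>snd (f a) $ i - snd (f b) $ i\<bar> \<le> L2 * norm (a - b) \<and> \<bar>snd (f a) $ i\<bar> \<le> M2"
    using smooth_family_uniform_lipschitz_bound[of "UNIV :: 'n set" "\<lambda>i y. snd (f y) $ i" Q] sp Q
    by auto
  have "norm (f a - f b) \<le> (CARD('n) * (L1 + L2)) * norm (a - b) \<and> norm (f a) \<le> CARD('n) * (M1 + M2)"
    if "a \<in> Q" "b \<in> Q" for a b
  proof
    have "norm (f a - f b) \<le> (\<Sum>i\<in>UNIV. \<bar>fst (f a - f b) $ i\<bar>) + (\<Sum>i\<in>UNIV. \<bar>snd (f a - f b) $ i\<bar>)"
      using norm_cart_Pair_le_sum[of "fst (f a - f b)" "snd (f a - f b)"] by (simp only: prod.collapse)
    also have "\<dots> \<le> (\<Sum>i\<in>(UNIV::'n set). L1 * norm (a - b)) + (\<Sum>i\<in>(UNIV::'n set). L2 * norm (a - b))"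
      using LM1(3) LM2(3) that by (intro add_mono sum_mono) auto
    finally show "norm (f a - f b) \<le> (CARD('n) * (L1 + L2)) * norm (a - b)"
      by (simp add: algebra_simps)
    have "norm (f a) \<le> (\<Sum>i\<in>UNIV. \<bar>fst (f a) $ i\<bar>) + (\<Sum>i\<in>UNIV. \<bar>snd (f a) $ i\<bar>)"
      using norm_cart_Pair_le_sum[of "fst (f a)" "snd (f a)"] by (simp only: prod.collapse)
    also have "\<dots> \<le> (\<Sum>i\<in>(UNIV::'n set). M1) + (\<Sum>i\<in>(UNIV::'n set). M2)"
      using LM1(3) LM2(3) that by (intro add_mono sum_mono) auto
    finally show "norm (f a) \<le> CARD('n) * (M1 + M2)" by (simp add: algebra_simps)
  qed
  moreover have "0 \<le> CARD('n) * (L1 + L2)" "0 \<le> CARD('n) * (M1 + M2)"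
    using LM1 LM2 by simp_all
  ultimately show ?thesis by blast
qed

lemma continuous_at_Pair_zero_eventually:
  fixes F :: "'a::real_normed_vector \<times> real \<Rightarrow> real"
  assumes "isCont F (x0, 0)" "e > 0"
  shows "\<exists>\<delta>>0. \<forall>w h. dist w x0 < \<delta> \<and> \<bar>h\<bar> < \<delta> \<longrightarrow> \<bar>F (w, h) - F (x0, 0)\<bar> < e"
proof -
  obtain r where r: "r > 0" "\<And>z. dist z (x0, 0) < r \<Longrightarrow> dist (F z) (F (x0, 0)) < e"
    using assms[unfolded continuous_at_eps_delta] by blast
  have "dist (w, h) (x0, 0) < r" if "dist w x0 < r / 2" "\<bar>h\<bar> < r / 2" for w h
    using norm_Pair_le[of "w - x0" h] that by (simp add: dist_norm)
  with r show ?thesis by (intro exI[of _ "r / 2"]) (auto simp: dist_real_def)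
qed

lemma exists_small_step:
  fixes M c :: real
  assumes "c > 0"
  shows "\<exists>\<delta>>0. \<forall>h. 0 < h \<and> h < \<delta> \<longrightarrow> h * M < c"
proof -
  have "h * M < c" if "0 < h" "h < c / (\<bar>M\<bar> + 1)" for h
  proof -
    have "h * M \<le> h * (\<bar>M\<bar> + 1)" using that by (intro mult_left_mono) auto
    also have "\<dots> < c" using that by (simp add: less_divide_eq)
    finally show ?thesis .
  qed
  with assms show ?thesis by (intro exI[of _ "c / (\<bar>M\<bar> + 1)"]) auto
qed

subsection \<open>Solutions of autonomous differential equations\<close>

lemma norm_diff_le_of_vector_derivative_bound:
  fixes y :: "real \<Rightarrow> 'b::real_normed_vector"
  assumes ab: "a \<le> b"
    and d: "\<And>s. s \<in> {a..b} \<Longrightarrow> (y has_vector_derivative y' s) (at s within {a..b})"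
    and B: "\<And>s. s \<in> {a..b} \<Longrightarrow> norm (y' s) \<le> B"
  shows "norm (y b - y a) \<le> B * (b - a)"
proof -
  have "norm (y b - y a) \<le> B * norm (b - a)"
  proof (rule differentiable_bound[of "{a..b}" y "\<lambda>s h. h *\<^sub>R y' s"])
    show "\<And>x. x \<in> {a..b} \<Longrightarrow> (y has_derivative (\<lambda>h. h *\<^sub>R y' x)) (at x within {a..b})"
      using d by (simp add: has_vector_derivative_def)
    show "onorm (\<lambda>h. h *\<^sub>R y' x) \<le> B" if "x \<in> {a..b}" for x
    proof (rule onorm_le)
      fix h :: real
      have "\<bar>h\<bar> * norm (y' x) \<le> \<bar>h\<bar> * B" using B[OF that] by (intro mult_left_mono) auto
      then show "norm (h *\<^sub>R y' x) \<le> B * norm h" by (simp add: mult.commute)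
    qed
  qed (use ab in auto)
  then show ?thesis using ab by simp
qed

lemma solves_on_continuous_on:
  assumes "solves_on X y {t..t+h}"
  shows "continuous_on {t..t+h} y"
  using assms unfolding solves_on_def
  by (metis continuous_on_eq_continuous_within has_vector_derivative_continuous)

lemma solves_on_subinterval:
  assumes "solves_on X y {t..t+h}" "s \<in> {t..t+h}" "\<sigma> \<in> {t..s}"
  shows "(y has_vector_derivative X (y \<sigma>)) (at \<sigma> within {t..s})"
proof -
  have "(y has_vector_derivative X (y \<sigma>)) (at \<sigma> within {t..t+h})"
    using assms unfolding solves_on_def by auto
  then show ?thesis
    by (rule has_vector_derivative_within_subset) (use assms in auto)
qed

lemma continuous_on_stays_below:
  fixes \<phi> :: "real \<Rightarrow> real"
  assumes c: "continuous_on {t..T} \<phi>" and t: "\<phi> t < \<rho>" and rr: "\<rho>' < \<rho>"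
    and step: "\<And>s. s \<in> {t..T} \<Longrightarrow> (\<forall>\<sigma>\<in>{t..s}. \<phi> \<sigma> < \<rho>) \<Longrightarrow> \<phi> s \<le> \<rho>'"
  shows "\<forall>s\<in>{t..T}. \<phi> s < \<rho>"
proof (rule ccontr)
  assume nt: "\<not> ?thesis"
  define A where "A = {s\<in>{t..T}. \<rho> \<le> \<phi> s}"
  have Ane: "A \<noteq> {}" using nt unfolding A_def by auto
  have "closed A" unfolding A_def
    using continuous_closed_preimage[OF c closed_atLeastAtMost, of "{\<rho>..}"] 
    by (simp add: vimage_def Int_def conj_commute)
  moreover have "bounded A" unfolding A_def by (rule bounded_subset[of "{t..T}"]) auto
  ultimately have cA: "compact A" by (simp add: compact_eq_bounded_closed)
  obtain s1 where s1: "s1 \<in> A" "\<And>s. s \<in> A \<Longrightarrow> s1 \<le> s"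
    using compact_attains_inf[OF cA Ane] by blast
  have s1t: "s1 \<in> {t..T}" "\<rho> \<le> \<phi> s1" using s1 unfolding A_def by auto
  have below: "\<phi> \<sigma> < \<rho>" if "\<sigma> \<in> {t..<s1}" for \<sigma>
  proof (rule ccontr)
    assume "\<not> \<phi> \<sigma> < \<rho>"
    then have "\<sigma> \<in> A" using that s1t unfolding A_def by auto
    then show False using s1(2) that by fastforce
  qed
  have tlt: "t < s1" using s1t t by (cases "t = s1") auto
  have le: "\<phi> \<sigma> \<le> \<rho>'" if "\<sigma> \<in> {t..<s1}" for \<sigma>
    using that s1t by (intro step) (auto intro!: below)
  obtain d where d: "d > 0" "\<And>x. x \<in> {t..T} \<Longrightarrow> dist x s1 < d \<Longrightarrow> dist (\<phi> x) (\<phi> s1) < \<rho> - \<rho>'"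
    using c[unfolded continuous_on_iff] s1t rr by (metis diff_gt_0_iff_gt)
  define \<sigma> where "\<sigma> = max t (s1 - d / 2)"
  have \<sigma>: "\<sigma> \<in> {t..<s1}" "\<sigma> \<in> {t..T}" "dist \<sigma> s1 < d"
    using tlt d s1t unfolding \<sigma>_def by (auto simp: dist_real_def)
  have "\<phi> s1 < \<phi> \<sigma> + (\<rho> - \<rho>')" using d(2)[OF \<sigma>(2,3)] by (simp add: dist_real_def)
  then show False using le[OF \<sigma>(1)] s1t by linarith
qed

lemma solves_on_stays_in_ball:
  fixes f :: "'a::real_normed_vector \<Rightarrow> 'a"
  assumes sol: "solves_on f y {t..t+h}" and h: "0 \<le> h"
    and fb: "\<And>w. w \<in> cball x0 r \<Longrightarrow> norm (f w) \<le> M"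
    and start: "dist x0 (y t) + h * M < r" and M0: "0 \<le> M"
  shows "\<forall>s\<in>{t..t+h}. dist x0 (y s) < r"
proof (rule continuous_on_stays_below[where \<rho>' = "dist x0 (y t) + h * M"])
  show "continuous_on {t..t+h} (\<lambda>s. dist x0 (y s))"
    using solves_on_continuous_on[OF sol] by (intro continuous_intros)
  show "dist x0 (y t) < r" using start h M0 by (smt (verit) mult_nonneg_nonneg)
  show "dist x0 (y t) + h * M < r" by (rule start)
  fix s assume s: "s \<in> {t..t+h}" and inside: "\<forall>\<sigma>\<in>{t..s}. dist x0 (y \<sigma>) < r"
  have "norm (y s - y t) \<le> M * (s - t)"
    using s inside
    by (intro norm_diff_le_of_vector_derivative_bound[where y' = "\<lambda>\<sigma>. f (y \<sigma>)"]
        solves_on_subinterval[OF sol] fb) (auto simp: less_imp_le)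
  also have "\<dots> \<le> h * M" using s M0 by (simp add: mult.commute mult_left_mono)
  finally show "dist x0 (y s) \<le> dist x0 (y t) + h * M"
    using dist_triangle[of x0 "y s" "y t"] by (simp add: dist_norm norm_minus_commute)
qed

text \<open>A Gronwall estimate over a short step: \<open>h L \<le> 1/2\<close> lets the maximal deviation absorb
  its own Lipschitz term.\<close>

lemma solves_on_perturbed_close:
  fixes f g :: "'a::real_normed_vector \<Rightarrow> 'a"
  assumes sy: "solves_on f y {t..t+h}" and sz: "solves_on g z {t..t+h}" and h: "0 \<le> h"
    and yz: "y t = z t"
    and inK: "\<And>s. s \<in> {t..t+h} \<Longrightarrow> y s \<in> K \<and> z s \<in> K"
    and lip: "\<And>a b. a \<in> K \<Longrightarrow> b \<in> K \<Longrightarrow> norm (g a - g b) \<le> L * norm (a - b)"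
    and L: "0 \<le> L" and hL: "h * L \<le> 1/2"
    and eps: "\<And>s. s \<in> {t..t+h} \<Longrightarrow> norm (f (y s) - g (y s)) \<le> \<epsilon>"
  shows "norm (y (t+h) - z (t+h)) \<le> 2 * h * \<epsilon>"
proof -
  have "continuous_on {t..t+h} (\<lambda>s. norm (y s - z s))"
    using solves_on_continuous_on[OF sy] solves_on_continuous_on[OF sz] by (intro continuous_intros)
  then obtain s0 where s0: "s0 \<in> {t..t+h}"
    and smax: "\<And>s. s \<in> {t..t+h} \<Longrightarrow> norm (y s - z s) \<le> norm (y s0 - z s0)"
    using continuous_attains_sup[of "{t..t+h}" "\<lambda>s. norm (y s - z s)"] h by auto
  define D where "D = norm (y s0 - z s0)"
  have e0: "0 \<le> \<epsilon>" using eps[of t] h by (smt (verit) atLeastAtMost_iff norm_ge_zero)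
  have D0: "0 \<le> D" unfolding D_def by simp
  have "norm ((y s0 - z s0) - (y t - z t)) \<le> (\<epsilon> + L * D) * (s0 - t)"
  proof (rule norm_diff_le_of_vector_derivative_bound[where y' = "\<lambda>s. f (y s) - g (z s)"])
    fix s assume s: "s \<in> {t..s0}"
    then have s': "s \<in> {t..t+h}" using s0 by auto
    show "((\<lambda>s. y s - z s) has_vector_derivative f (y s) - g (z s)) (at s within {t..s0})"
      using solves_on_subinterval[OF sy s0 s] solves_on_subinterval[OF sz s0 s]
      by (rule has_vector_derivative_diff)
    have "norm (f (y s) - g (z s)) \<le> norm (f (y s) - g (y s)) + norm (g (y s) - g (z s))"
      by (rule norm_diff_triangle_le[where y = "g (y s)"]) simp_all
    also have "\<dots> \<le> \<epsilon> + L * norm (y s - z s)"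
      using eps[OF s'] lip[of "y s" "z s"] inK[OF s'] by (intro add_mono) auto
    also have "\<dots> \<le> \<epsilon> + L * D"
      using smax[OF s'] L unfolding D_def by (intro add_left_mono mult_left_mono) auto
    finally show "norm (f (y s) - g (z s)) \<le> \<epsilon> + L * D" .
  qed (use s0 in auto)
  then have "D \<le> (\<epsilon> + L * D) * (s0 - t)" using yz unfolding D_def by simp
  also have "\<dots> \<le> (\<epsilon> + L * D) * h" using s0 e0 L D0 by (intro mult_left_mono) auto
  also have "\<dots> = h * \<epsilon> + (h * L) * D" by (simp add: algebra_simps)
  also have "\<dots> \<le> h * \<epsilon> + D / 2"
    using mult_right_mono[OF hL D0] by simp
  finally have "D \<le> 2 * h * \<epsilon>" by simp
  moreover have "norm (y (t+h) - z (t+h)) \<le> D" using smax[of "t+h"] h unfolding D_def by simp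
  ultimately show ?thesis by simp
qed

text \<open>Picard-Lindel\<ouml>f: a solution is a fixed point of the integral operator on bounded
  continuous curves in the ball. Times are clamped to \<open>[t, t + h]\<close> so that the iterates are
  bounded continuous functions on all of \<open>\<real>\<close>.\<close>

locale picard_setting =
  fixes g :: "'a::euclidean_space \<Rightarrow> 'a" and x0 x :: 'a and r L M t h :: real
  assumes lipschitz: "\<And>a b. a \<in> cball x0 r \<Longrightarrow> b \<in> cball x0 r \<Longrightarrow> norm (g a - g b) \<le> L * norm (a - b)"
    and bounded: "\<And>a. a \<in> cball x0 r \<Longrightarrow> norm (g a) \<le> M"
    and start: "dist x0 x + h * M \<le> r"
    and h: "0 < h" and L: "0 \<le> L" and hL: "h * L \<le> 1/2" and M: "0 \<le> M"
begin

definition clamp :: "real \<Rightarrow> real" where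
  "clamp s = max t (min (t + h) s)"

definition curves :: "(real \<Rightarrow>\<^sub>C 'a) set" where
  "curves = PiC UNIV (\<lambda>_. cball x0 r)"

definition picard_map :: "(real \<Rightarrow>\<^sub>C 'a) \<Rightarrow> real \<Rightarrow> 'a" where
  "picard_map \<phi> s = x + integral {t..clamp s} (\<lambda>\<tau>. g (\<phi> \<tau>))"

lemma clamp_in: "clamp s \<in> {t..t+h}"
  using h by (auto simp: clamp_def)

lemma mem_curves_iff: "\<phi> \<in> curves \<longleftrightarrow> (\<forall>s. \<phi> s \<in> cball x0 r)"
  unfolding curves_def mem_PiC_iff by auto

lemma continuous_on_g_curve:
  assumes "\<phi> \<in> curves"
  shows "continuous_on A (\<lambda>\<tau>. g (\<phi> \<tau>))"
proof -
  have "L-lipschitz_on (cball x0 r) g"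
    by (rule lipschitz_onI) (use lipschitz L in \<open>auto simp: dist_norm\<close>)
  then have "continuous_on (cball x0 r) g" by (rule lipschitz_on_continuous_on)
  moreover have "range (apply_bcontfun \<phi>) \<subseteq> cball x0 r" using assms mem_curves_iff by auto
  ultimately have "continuous_on UNIV (\<lambda>\<tau>. g (\<phi> \<tau>))"
    using continuous_on_compose2[OF _ continuous_on_apply_bcontfun[of UNIV \<phi>]] by auto
  then show ?thesis by (rule continuous_on_subset) simp
qed

lemma integral_g_curve_bound:
  assumes "\<phi> \<in> curves" "u \<in> {t..t+h}"
  shows "norm (integral {t..u} (\<lambda>\<tau>. g (\<phi> \<tau>))) \<le> M * (u - t)"
  using assms by (intro integral_bound continuous_on_g_curve) (auto simp: mem_curves_iff intro!: bounded)

lemma picard_map_bcontfun: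
  assumes \<phi>: "\<phi> \<in> curves"
  shows "picard_map \<phi> \<in> bcontfun"
proof (rule bcontfun_normI)
  have "continuous_on {t..t+h} (\<lambda>u. integral {t..u} (\<lambda>\<tau>. g (\<phi> \<tau>)))"
    using continuous_on_g_curve[OF \<phi>] by (intro indefinite_integral_continuous_1 integrable_continuous_real)
  moreover have "continuous_on UNIV clamp" unfolding clamp_def by (intro continuous_intros)
  moreover have "clamp ` UNIV \<subseteq> {t..t+h}" using clamp_in by auto
  ultimately have "continuous_on UNIV (\<lambda>s. integral {t..clamp s} (\<lambda>\<tau>. g (\<phi> \<tau>)))"
    by (rule continuous_on_compose2)
  then show "continuous_on UNIV (picard_map \<phi>)"
    unfolding picard_map_def by (intro continuous_intros)
  fix s
  have "norm (picard_map \<phi> s) \<le> norm x + norm (integral {t..clamp s} (\<lambda>\<tau>. g (\<phi> \<tau>)))"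
    unfolding picard_map_def by (rule norm_triangle_ineq)
  also have "\<dots> \<le> norm x + M * (clamp s - t)"
    using integral_g_curve_bound[OF \<phi> clamp_in[of s]] by simp
  also have "\<dots> \<le> norm x + M * h" using clamp_in[of s] M by (intro add_left_mono mult_left_mono) auto
  finally show "norm (picard_map \<phi> s) \<le> norm x + M * h" .
qed

lemma apply_Bcontfun_picard_map: "\<phi> \<in> curves \<Longrightarrow> apply_bcontfun (Bcontfun (picard_map \<phi>)) = picard_map \<phi>"
  using picard_map_bcontfun by (simp add: Bcontfun_inverse)

lemma picard_map_in_curves:
  assumes \<phi>: "\<phi> \<in> curves"
  shows "Bcontfun (picard_map \<phi>) \<in> curves"
proof -
  have "dist x0 (picard_map \<phi> s) \<le> r" for s
  proof -
    have "dist x0 (picard_map \<phi> s) \<le> dist x0 x + norm (integral {t..clamp s} (\<lambda>\<tau>. g (\<phi> \<tau>)))"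
      using dist_triangle[of x0 "picard_map \<phi> s" x] unfolding picard_map_def by (simp add: dist_norm)
    also have "\<dots> \<le> dist x0 x + M * (clamp s - t)"
      using integral_g_curve_bound[OF \<phi> clamp_in[of s]] by simp
    also have "\<dots> \<le> dist x0 x + M * h"
      using clamp_in[of s] M by (intro add_left_mono mult_left_mono) auto
    finally show ?thesis using start by (simp add: mult.commute)
  qed
  then show ?thesis unfolding mem_curves_iff apply_Bcontfun_picard_map[OF \<phi>] by simp
qed

lemma picard_map_contraction:
  assumes \<phi>: "\<phi> \<in> curves" and \<psi>: "\<psi> \<in> curves"
  shows "dist (Bcontfun (picard_map \<phi>)) (Bcontfun (picard_map \<psi>)) \<le> 1/2 * dist \<phi> \<psi>"
proof (rule dist_bound)
  fix s
  have integrable: "(\<lambda>\<tau>. g (\<gamma> \<tau>)) integrable_on {t..clamp s}" if "\<gamma> \<in> curves" for \<gamma>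
    using continuous_on_g_curve[OF that] by (rule integrable_continuous_real)
  have "dist (picard_map \<phi> s) (picard_map \<psi> s)
      = norm (integral {t..clamp s} (\<lambda>\<tau>. g (\<phi> \<tau>) - g (\<psi> \<tau>)))"
    unfolding picard_map_def dist_norm by (simp add: integral_diff[OF integrable[OF \<phi>] integrable[OF \<psi>]])
  also have "\<dots> \<le> (L * dist \<phi> \<psi>) * (clamp s - t)"
  proof (rule integral_bound)
    show "continuous_on {t..clamp s} (\<lambda>\<tau>. g (\<phi> \<tau>) - g (\<psi> \<tau>))"
      by (intro continuous_intros continuous_on_g_curve \<phi> \<psi>)
    fix \<tau>
    have "norm (g (\<phi> \<tau>) - g (\<psi> \<tau>)) \<le> L * norm (\<phi> \<tau> - \<psi> \<tau>)"
      using \<phi> \<psi> by (intro lipschitz) (auto simp: mem_curves_iff)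
    also have "\<dots> \<le> L * dist \<phi> \<psi>"
      using dist_bounded[of \<phi> \<tau> \<psi>] L by (intro mult_left_mono) (auto simp: dist_norm)
    finally show "norm (g (\<phi> \<tau>) - g (\<psi> \<tau>)) \<le> L * dist \<phi> \<psi>" .
  qed (use clamp_in[of s] in auto)
  also have "\<dots> \<le> (L * dist \<phi> \<psi>) * h"
    using clamp_in[of s] L by (intro mult_left_mono) auto
  also have "\<dots> = (h * L) * dist \<phi> \<psi>" by simp
  also have "\<dots> \<le> 1/2 * dist \<phi> \<psi>" using hL by (intro mult_right_mono) auto
  finally show "dist (Bcontfun (picard_map \<phi>) s) (Bcontfun (picard_map \<psi>) s) \<le> 1/2 * dist \<phi> \<psi>"
    using apply_Bcontfun_picard_map[OF \<phi>] apply_Bcontfun_picard_map[OF \<psi>] by simp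
qed

lemma picard_fixed_point: "\<exists>\<phi>\<in>curves. Bcontfun (picard_map \<phi>) = \<phi>"
proof -
  have complete: "complete curves" unfolding curves_def by (simp add: complete_eq_closed closed_PiC)
  have nonempty: "curves \<noteq> {}"
  proof -
    have "0 \<le> r"
      using start h M by (metis add_nonneg_nonneg order_trans zero_le_dist mult_nonneg_nonneg less_imp_le)
    then have "Bcontfun (\<lambda>_. x0) \<in> curves"
      by (simp add: mem_curves_iff Bcontfun_inverse const_bcontfun)
    then show ?thesis by blast
  qed
  have "(\<lambda>\<phi>. Bcontfun (picard_map \<phi>)) ` curves \<subseteq> curves"
    using picard_map_in_curves by blast
  from Banach_fix[OF complete nonempty _ _ this picard_map_contraction]
  have "\<exists>!\<phi>\<in>curves. Bcontfun (picard_map \<phi>) = \<phi>" by simp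
  then show ?thesis by blast
qed

theorem solution_exists: "\<exists>y. solves_on g y {t..t+h} \<and> y t = x \<and> (\<forall>s\<in>{t..t+h}. y s \<in> cball x0 r)"
proof -
  obtain \<phi> where \<phi>: "\<phi> \<in> curves" "Bcontfun (picard_map \<phi>) = \<phi>"
    using picard_fixed_point by blast
  have fixed: "apply_bcontfun \<phi> = picard_map \<phi>"
    using apply_Bcontfun_picard_map[OF \<phi>(1)] \<phi>(2) by simp
  have eq: "\<phi> s = x + integral {t..s} (\<lambda>\<tau>. g (\<phi> \<tau>))" if "s \<in> {t..t+h}" for s
  proof -
    have "\<phi> s = picard_map \<phi> s" using fun_cong[OF fixed] .
    also have "\<dots> = x + integral {t..s} (\<lambda>\<tau>. g (\<phi> \<tau>))"
      using that unfolding picard_map_def clamp_def by simp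
    finally show ?thesis .
  qed
  have "solves_on g \<phi> {t..t+h}"
    unfolding solves_on_def
  proof
    fix s assume s: "s \<in> {t..t+h}"
    have "((\<lambda>u. x + integral {t..u} (\<lambda>\<tau>. g (\<phi> \<tau>))) has_vector_derivative g (\<phi> s)) (at s within {t..t+h})"
      using continuous_on_g_curve[OF \<phi>(1)] s
      by (auto intro!: derivative_eq_intros integral_has_vector_derivative)
    then show "(\<phi> has_vector_derivative g (\<phi> s)) (at s within {t..t+h})"
      by (rule has_vector_derivative_transform[OF s eq, rotated])
  qed
  moreover have "\<phi> t = x" using eq[of t] h by simp
  ultimately show ?thesis using \<phi>(1) mem_curves_iff by blast
qed

end

lemma lipschitz_solution_close_to_perturbed:
  fixes f g :: "'a::euclidean_space \<Rightarrow> 'a"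
  assumes y: "solves_on f y {t..t+h}" and h: "0 < h"
    and lip: "\<And>a b. a \<in> cball x0 r \<Longrightarrow> b \<in> cball x0 r \<Longrightarrow> norm (g a - g b) \<le> L * norm (a - b)"
    and bound: "\<And>a. a \<in> cball x0 r \<Longrightarrow> norm (f a) \<le> M \<and> norm (g a) \<le> M"
    and start: "dist x0 (y t) + h * M < r" and L: "0 \<le> L" and M: "0 \<le> M" and hL: "h * L \<le> 1/2"
    and eps: "\<And>s. s \<in> {t..t+h} \<Longrightarrow> y s \<in> cball x0 r \<Longrightarrow> norm (f (y s) - g (y s)) \<le> \<epsilon>"
  shows "\<exists>z. solves_on g z {t..t+h} \<and> z t = y t \<and> norm (y (t+h) - z (t+h)) \<le> 2 * h * \<epsilon>"
proof -
  have y_in: "y s \<in> cball x0 r" if "s \<in> {t..t+h}" for s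
    using solves_on_stays_in_ball[OF y _ _ start M] h bound that by (auto simp: less_imp_le)
  have "\<exists>z. solves_on g z {t..t+h} \<and> z t = y t \<and> (\<forall>s\<in>{t..t+h}. z s \<in> cball x0 r)"
    by (rule picard_setting.solution_exists[where L = L and M = M], unfold_locales)
      (use lip bound start h L hL M in auto)
  then obtain z where z: "solves_on g z {t..t+h}" "z t = y t" "\<forall>s\<in>{t..t+h}. z s \<in> cball x0 r"
    by blast
  have "norm (y (t+h) - z (t+h)) \<le> 2 * h * \<epsilon>"
  proof (rule solves_on_perturbed_close[OF y z(1) _ _ _ lip L hL])
    show "0 \<le> h" "y t = z t" using h z(2) by simp_all
    show "\<And>s. s \<in> {t..t+h} \<Longrightarrow> y s \<in> cball x0 r \<and> z s \<in> cball x0 r" using y_in z(3) by blast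
    show "\<And>s. s \<in> {t..t+h} \<Longrightarrow> norm (f (y s) - g (y s)) \<le> \<epsilon>" using eps y_in by blast
  qed
  with z show ?thesis by blast
qed

subsection \<open>The modified conformal Hamiltonian\<close>

lemma Et_Suc: "Et H Ec (Suc k) h x = Et H Ec k h x + h ^ Suc k * Ec (Suc k) x"
  by (simp add: Et_def sum.cl_ivl_Suc)

lemma Et_0: "Et H Ec l 0 x = H x"
  unfolding Et_def by (auto intro!: sum.neutral)

lemma Kt_0: "Kt H N K l 0 x E = N x * (H x - E)"
  unfolding Kt_def by (auto intro!: sum.neutral)

type_synonym 'n phase = "(real^'n) \<times> (real^'n)"

locale modified_conformal_setting =
  fixes H N :: "('n::finite) phase \<Rightarrow> real"
    and K :: "nat \<Rightarrow> 'n phase \<Rightarrow> real \<Rightarrow> real"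
    and Ec :: "nat \<Rightarrow> 'n phase \<Rightarrow> real"
  assumes smooth_H: "smooth H" and smooth_N: "smooth N" and N_pos: "\<forall>x. N x > 0"
    and smooth_K: "\<forall>j\<ge>1. smooth (\<lambda>z::'n phase \<times> real. K j (fst z) (snd z))"
    and modified: "modified_conformal_hamiltonian H N K Ec"
begin

definition Kt_joint :: "nat \<Rightarrow> ('n phase \<times> real) \<times> real \<Rightarrow> real" where
  "Kt_joint m y = Kt H N K m (snd (fst y)) (fst (fst y)) (snd y)"

definition Et_joint :: "nat \<Rightarrow> 'n phase \<times> real \<Rightarrow> real" where
  "Et_joint m z = Et H Ec m (snd z) (fst z)"

definition residual :: "nat \<Rightarrow> 'n phase \<times> real \<Rightarrow> real" where
  "residual m z = Kt_joint m (z, Et_joint m z)"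

lemma Kt_joint_Pair [simp]: "Kt_joint m ((x, h), E) = Kt H N K m h x E"
  by (simp add: Kt_joint_def)

lemma Et_joint_Pair [simp]: "Et_joint m (x, h) = Et H Ec m h x"
  by (simp add: Et_joint_def)

lemma smooth_Kt_joint: "smooth (Kt_joint m)"
proof -
  have K: "smooth (\<lambda>y::('n phase \<times> real) \<times> real. K j (fst (fst y)) (snd y))" if "j \<in> {1..m}" for j
  proof -
    have "linear (\<lambda>y::('n phase \<times> real) \<times> real. (fst (fst y), snd y))"
      by (auto simp: linear_iff)
    from smooth_compose_linear[OF this, of "\<lambda>z. K j (fst z) (snd z)"] smooth_K that
    show ?thesis by simp
  qed
  have "smooth (\<lambda>y::('n phase \<times> real) \<times> real. N (fst (fst y)) * (H (fst (fst y)) - snd y)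
      + (\<Sum>j\<in>{1..m}. snd (fst y) ^ j * K j (fst (fst y)) (snd y)))"
    by (intro smooth_intros smooth_N smooth_H K) auto
  then show ?thesis unfolding Kt_joint_def Kt_def by simp
qed

lemma smooth_Et_joint_upto:
  "(\<And>i. 1 \<le> i \<Longrightarrow> i \<le> m \<Longrightarrow> smooth (Ec i)) \<Longrightarrow> smooth (Et_joint m)"
  unfolding Et_joint_def Et_def by (intro smooth_intros smooth_H) auto

lemma smooth_Kt_joint_compose: "smooth e \<Longrightarrow> smooth (\<lambda>z. Kt_joint m (z, e z))"
  using smooth_compose_Pair[OF linear_id smooth_Kt_joint] by (simp add: id_def)

lemma K_lipschitz_in_energy:
  assumes "j \<ge> 1"
  shows "\<exists>L. \<forall>a b. \<bar>a\<bar> \<le> B \<and> \<bar>b\<bar> \<le> B \<longrightarrow> \<bar>K j x a - K j x b\<bar> \<le> L * \<bar>a - b\<bar>"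
proof -
  have "compact ({x} \<times> {-B..B})" "convex ({x} \<times> {-B..B})"
    by (auto intro!: compact_Times convex_Times)
  from smooth_lipschitz_on_compact_convex[OF _ this] smooth_K assms obtain L where
    L: "\<forall>a\<in>{x} \<times> {-B..B}. \<forall>b\<in>{x} \<times> {-B..B}.
          \<bar>K j (fst a) (snd a) - K j (fst b) (snd b)\<bar> \<le> L * norm (a - b)"
    by fastforce
  have "\<bar>K j x a - K j x b\<bar> \<le> L * \<bar>a - b\<bar>" if "\<bar>a\<bar> \<le> B" "\<bar>b\<bar> \<le> B" for a b
    using L[rule_format, of "(x, a)" "(x, b)"] that by (auto simp: abs_le_iff)
  then show ?thesis by blast
qed

lemma Kt_energy_shift_bound:
  "\<exists>C. \<forall>h\<in>{0..1}. \<forall>E d. \<bar>E\<bar> \<le> B \<and> \<bar>E + d\<bar> \<le> B \<longrightarrow>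
     \<bar>Kt H N K m h x (E + d) - Kt H N K m h x E + N x * d\<bar> \<le> C * h * \<bar>d\<bar>"
proof -
  have "\<forall>j\<in>{1..m}. \<exists>L. \<forall>a b. \<bar>a\<bar> \<le> B \<and> \<bar>b\<bar> \<le> B \<longrightarrow> \<bar>K j x a - K j x b\<bar> \<le> L * \<bar>a - b\<bar>"
    using K_lipschitz_in_energy by auto
  then obtain L where L: "\<And>j a b. j \<in> {1..m} \<Longrightarrow> \<bar>a\<bar> \<le> B \<Longrightarrow> \<bar>b\<bar> \<le> B \<Longrightarrow>
      \<bar>K j x a - K j x b\<bar> \<le> L j * \<bar>a - b\<bar>"
    by metis
  have "\<bar>Kt H N K m h x (E + d) - Kt H N K m h x E + N x * d\<bar> \<le> (\<Sum>j\<in>{1..m}. \<bar>L j\<bar>) * h * \<bar>d\<bar>"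
    if h: "h \<in> {0..1}" and E: "\<bar>E\<bar> \<le> B" "\<bar>E + d\<bar> \<le> B" for h E d
  proof -
    have "\<bar>Kt H N K m h x (E + d) - Kt H N K m h x E + N x * d\<bar>
        = \<bar>\<Sum>j\<in>{1..m}. h ^ j * (K j x (E + d) - K j x E)\<bar>"
      by (simp add: Kt_def algebra_simps sum_subtractf[symmetric])
    also have "\<dots> \<le> (\<Sum>j\<in>{1..m}. h * (\<bar>L j\<bar> * \<bar>d\<bar>))"
    proof (rule order_trans[OF sum_abs sum_mono])
      fix j assume j: "j \<in> {1..m}"
      have "\<bar>K j x (E + d) - K j x E\<bar> \<le> L j * \<bar>d\<bar>" using L[OF j E(2,1)] by simp
      also have "\<dots> \<le> \<bar>L j\<bar> * \<bar>d\<bar>" by (intro mult_right_mono) auto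
      finally have "\<bar>K j x (E + d) - K j x E\<bar> \<le> \<bar>L j\<bar> * \<bar>d\<bar>" .
      moreover have "h ^ j \<le> h" using power_decreasing[of 1 j h] j h by simp
      ultimately show "\<bar>h ^ j * (K j x (E + d) - K j x E)\<bar> \<le> h * (\<bar>L j\<bar> * \<bar>d\<bar>)"
        using h by (simp add: abs_mult mult_mono)
    qed
    finally show ?thesis by (simp add: sum_distrib_left sum_distrib_right ac_simps)
  qed
  then show ?thesis by blast
qed

text \<open>The coefficient of \<open>h^m\<close> in \<open>K_mod^(m)(x; h, E^(m-1)(x; h) + h^m E_m(x)) = O(h^(m+1))\<close>
  expresses \<open>E_m\<close> through \<open>N\<close> and lower-order data; this is what makes the \<open>E_j\<close> smooth.\<close>

lemma Ec_Suc_eq: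
  assumes lower: "\<And>i. 1 \<le> i \<Longrightarrow> i \<le> k \<Longrightarrow> smooth (Ec i)"
  shows "Ec (Suc k) x
    = (partial_snd ^^ Suc k) (\<lambda>z. Kt_joint (Suc k) (z, Et_joint k z)) (x, 0) / (fact (Suc k) * N x)"
proof -
  define m where "m = Suc k"
  define c where "c = Ec m x"
  define G0 where "G0 z = Kt_joint m (z, Et_joint k z)" for z
  define Gc where "Gc z = Kt_joint m (z, Et_joint k z + snd z ^ m * c)" for z
  have Ek: "smooth (Et_joint k)" using lower by (rule smooth_Et_joint_upto)
  have G0: "smooth G0" unfolding G0_def using Ek by (rule smooth_Kt_joint_compose)
  have Gc: "smooth Gc" unfolding Gc_def using Ek by (intro smooth_Kt_joint_compose smooth_intros)
  have "(\<lambda>h. Kt H N K m h x (Et H Ec m h x)) = (\<lambda>h. Gc (x, h))"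
    by (simp add: Gc_def m_def c_def Et_Suc)
  moreover have "(deriv ^^ m) (\<lambda>h. Kt H N K m h x (Et H Ec m h x)) 0 = 0"
    using modified unfolding modified_conformal_hamiltonian_def by blast
  ultimately have top: "(partial_snd ^^ m) Gc (x, 0) = 0"
    using deriv_funpow_slice[OF Gc] by simp
  have "compact ({x} \<times> {0..1::real})" by (intro compact_Times) auto
  from smooth_abs_bound[OF Ek this] obtain B where B: "\<forall>z\<in>{x} \<times> {0..1}. \<bar>Et_joint k z\<bar> \<le> B"
    by blast
  obtain C where C: "\<forall>h\<in>{0..1}. \<forall>E d. \<bar>E\<bar> \<le> B + \<bar>c\<bar> \<and> \<bar>E + d\<bar> \<le> B + \<bar>c\<bar> \<longrightarrow>
      \<bar>Kt H N K m h x (E + d) - Kt H N K m h x E + N x * d\<bar> \<le> C * h * \<bar>d\<bar>"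
    using Kt_energy_shift_bound by blast
  have "\<bar>Gc (x, h) - G0 (x, h) - (- N x * c) * h ^ m\<bar> \<le> (C * \<bar>c\<bar>) * h ^ Suc m"
    if h: "0 < h" "h < 1" for h
  proof -
    define E where "E = Et H Ec k h x"
    have d: "\<bar>h ^ m * c\<bar> \<le> \<bar>c\<bar>"
      using h by (simp add: abs_mult power_le_one mult_left_le_one_le)
    have E: "\<bar>E\<bar> \<le> B" using B h unfolding E_def by auto
    then have "\<bar>E + h ^ m * c\<bar> \<le> B + \<bar>c\<bar>" using d by linarith
    with C E h have "\<bar>Kt H N K m h x (E + h ^ m * c) - Kt H N K m h x E + N x * (h ^ m * c)\<bar>
        \<le> C * h * \<bar>h ^ m * c\<bar>"
      by simp
    then show ?thesis using h by (simp add: Gc_def G0_def E_def abs_mult algebra_simps)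
  qed
  with partial_snd_funpow_diff_from_estimate[OF Gc G0]
  have "(partial_snd ^^ m) Gc (x, 0) - (partial_snd ^^ m) G0 (x, 0) = fact m * (- N x * c)"
    by blast
  with top have "(partial_snd ^^ m) G0 (x, 0) = fact m * N x * c" by simp
  then have "c = (partial_snd ^^ m) G0 (x, 0) / (fact m * N x)"
    using N_pos[rule_format, of x] by (simp add: field_simps)
  then show ?thesis unfolding c_def G0_def m_def .
qed

lemma smooth_Ec: "1 \<le> i \<Longrightarrow> smooth (Ec i)"
proof (induction i rule: less_induct)
  case (less i)
  then obtain k where k: "i = Suc k" by (cases i) auto
  have lower: "\<And>j. 1 \<le> j \<Longrightarrow> j \<le> k \<Longrightarrow> smooth (Ec j)" using less k by auto
  have eq: "Ec i = (\<lambda>x. (partial_snd ^^ i) (\<lambda>z. Kt_joint i (z, Et_joint k z)) (x, 0)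
      * (1 / N x) * (1 / fact i))"
    using Ec_Suc_eq[OF lower] k by (auto simp: field_simps)
  have "smooth (\<lambda>x. (partial_snd ^^ i) (\<lambda>z. Kt_joint i (z, Et_joint k z)) (x, 0)
      * (1 / N x) * (1 / fact i))"
    using N_pos lower
    by (intro smooth_mult smooth_const smooth_inverse smooth_N
        smooth_compose_linear[of "\<lambda>x. (x, 0)"] smooth_partial_snd_funpow
        smooth_Kt_joint_compose smooth_Et_joint_upto) (auto simp: linear_iff less_imp_neq[symmetric])
  then show ?case unfolding eq .
qed

lemma smooth_Et_joint: "smooth (Et_joint m)"
  by (intro smooth_Et_joint_upto smooth_Ec)

lemma smooth_residual: "smooth (residual m)"
  unfolding residual_def by (intro smooth_Kt_joint_compose smooth_Et_joint)

lemma partial_snd_funpow_residual_eq_0: "i \<le> m \<Longrightarrow> (partial_snd ^^ i) (residual m) (x, 0) = 0"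
proof -
  assume "i \<le> m"
  then have "(deriv ^^ i) (\<lambda>h. Kt H N K m h x (Et H Ec m h x)) 0 = 0"
    using modified unfolding modified_conformal_hamiltonian_def by blast
  moreover have "(\<lambda>h. Kt H N K m h x (Et H Ec m h x)) = (\<lambda>h. residual m (x, h))"
    by (simp add: residual_def)
  ultimately show ?thesis using deriv_funpow_slice[OF smooth_residual] by simp
qed

text \<open>Since \<open>partial_snd\<close> commutes with spatial derivatives, these inherit the vanishing
  \<open>h\<close>-Taylor coefficients of the residual.\<close>

lemma residual_fderiv_bound:
  assumes "compact S"
  shows "\<exists>A. \<forall>w\<in>S. \<forall>h. 0 \<le> h \<and> h \<le> 1 \<longrightarrow> \<bar>fderiv (residual m) (w, h) (u, 0)\<bar> \<le> A * h ^ Suc m"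
proof -
  define G where "G = (\<lambda>z. fderiv (residual m) z (u, 0))"
  have G: "smooth G" unfolding G_def by (intro smooth_fderiv smooth_residual)
  have "(partial_snd ^^ i) G (x, 0) = 0" if "i < Suc m" for i x
  proof -
    have "(partial_snd ^^ i) G = (\<lambda>z. fderiv ((partial_snd ^^ i) (residual m)) z (u, 0))"
      unfolding G_def by (rule partial_snd_funpow_fderiv[OF smooth_residual])
    moreover have "fderiv ((partial_snd ^^ i) (residual m)) (x, 0) (u, 0) = 0"
      using that partial_snd_funpow_residual_eq_0[of i m]
      by (intro fderiv_horizontal_eq_0 smooth_differentiable smooth_partial_snd_funpow smooth_residual)
        auto
    ultimately show ?thesis by simp
  qed
  with taylor_snd_remainder_bound[OF G assms, of "Suc m" 1] show ?thesis
    unfolding G_def by auto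
qed

abbreviation dK_dE :: "nat \<Rightarrow> 'n phase \<times> real \<Rightarrow> real" where
  "dK_dE m z \<equiv> fderiv (Kt_joint m) (z, Et_joint m z) ((0, 0), 1)"

lemma smooth_dK_dE: "smooth (dK_dE m)"
  using smooth_compose_Pair[OF linear_id smooth_fderiv[OF smooth_Kt_joint] smooth_Et_joint]
  by (simp add: id_def)

lemma deriv_Kt_energy: "deriv (\<lambda>E. Kt H N K l h w E) E = fderiv (Kt_joint l) ((w, h), E) ((0, 0), 1)"
proof -
  have "((\<lambda>t. Kt_joint l (((w, h), 0) + t *\<^sub>R ((0, 0), 1))) has_real_derivative
      fderiv (Kt_joint l) (((w, h), 0) + E *\<^sub>R ((0, 0), 1)) ((0, 0), 1)) (at E)"
    by (intro has_real_derivative_along_line smooth_differentiable smooth_Kt_joint)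
  then show ?thesis by (simp add: DERIV_imp_deriv)
qed

lemma mod_field_eq:
  "mod_field H N K Ec l h w = (- dK_dE l (w, h) *\<^sub>R dp (Et H Ec l h) w, dK_dE l (w, h) *\<^sub>R dq (Et H Ec l h) w)"
  unfolding mod_field_def deriv_Kt_energy by simp

lemma Nmod_eq: "Nmod H N K Ec l h w = - dK_dE l (w, h)"
  unfolding Nmod_def deriv_Kt_energy by simp

lemma fderiv_Kt_joint_energy_at_0: "fderiv (Kt_joint l) ((w, 0), H w) ((0, 0), 1) = - N w"
proof (rule fderiv_eq_line_derivative)
  show "Kt_joint l differentiable (at ((w, 0), H w))"
    by (intro smooth_differentiable smooth_Kt_joint)
  have "((\<lambda>t. N w * (H w - (H w + t))) has_real_derivative - N w) (at 0)"
    by (auto intro!: derivative_eq_intros)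
  then show "((\<lambda>t. Kt_joint l (((w, 0), H w) + t *\<^sub>R ((0, 0), 1))) has_real_derivative - N w) (at 0)"
    by (simp add: Kt_0)
qed

lemma linear_embed_phase: "linear (\<lambda>w::'n phase. ((w, 0::real), 0::real))"
  by (auto simp: linear_iff)

lemma ham_field_Kt:
  "ham_field (\<lambda>w. Kt H N K l h w E) w =
    ((\<chi> i. fderiv (Kt_joint l) ((w, h), E) (((0, axis i 1), 0), 0)),
     - (\<chi> i. fderiv (Kt_joint l) ((w, h), E) (((axis i 1, 0), 0), 0)))"
proof -
  have eq: "(\<lambda>w. Kt H N K l h w E) = (\<lambda>w. Kt_joint l (((0, h), E) + ((w, 0), 0)))"
    by simp
  have "Kt_joint l differentiable (at (((0, h), E) + ((w, 0), 0)))"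
    by (intro smooth_differentiable smooth_Kt_joint)
  from fderiv_compose_affine[OF this linear_embed_phase] show ?thesis
    unfolding ham_field_def dp_def dq_def eq by simp
qed

lemma has_derivative_Et:
  "(Et H Ec l h has_derivative (\<lambda>u. fderiv (Et_joint l) (w, h) (u, 0))) (at w)"
proof -
  have "linear (\<lambda>w::'n phase. (w, 0::real))" by (auto simp: linear_iff)
  from has_derivative_compose_affine[OF smooth_differentiable[OF smooth_Et_joint[of l]] this,
      where c = "(0, h)" and w = w]
  show ?thesis by simp
qed

lemma fderiv_Et: "fderiv (Et H Ec l h) w u = fderiv (Et_joint l) (w, h) (u, 0)"
  using fderiv_eqI[OF has_derivative_Et] by simp

lemma differentiable_Et: "Et H Ec l h differentiable (at w)"
  using has_derivative_Et differentiable_def by blast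

lemma fderiv_residual:
  "fderiv (residual l) (w, h) (u, 0) = fderiv (Kt_joint l) ((w, h), Et H Ec l h w) ((u, 0), 0)
    + fderiv (Et H Ec l h) w u * dK_dE l (w, h)"
proof -
  have "(residual l has_derivative
      (\<lambda>v. fderiv (Kt_joint l) ((w, h), Et_joint l (w, h)) (v, fderiv (Et_joint l) (w, h) v))) (at (w, h))"
    unfolding residual_def
    using has_derivative_compose_Pair[OF linear_id, of "Kt_joint l" "(w, h)" "Et_joint l"]
    by (simp add: smooth_differentiable smooth_Kt_joint smooth_Et_joint)
  from fderiv_eqI[OF this] have "fderiv (residual l) (w, h) (u, 0)
      = fderiv (Kt_joint l) ((w, h), Et H Ec l h w) ((u, 0), fderiv (Et_joint l) (w, h) (u, 0))"
    by simp
  also have "\<dots> = fderiv (Kt_joint l) ((w, h), Et H Ec l h w) ((u, 0), 0)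
      + fderiv (Et_joint l) (w, h) (u, 0) * dK_dE l (w, h)"
    using linear_Pair_real_split[OF linear_frechet_derivative[OF smooth_differentiable[OF smooth_Kt_joint]],
        of l "((w, h), Et H Ec l h w)" "(u, 0)" "fderiv (Et_joint l) (w, h) (u, 0)"]
    by (simp add: zero_prod_def)
  finally show ?thesis by (simp add: fderiv_Et)
qed

lemma ham_field_minus_mod_field:
  "ham_field (\<lambda>v. Kt H N K l h v (Et H Ec l h w)) w - mod_field H N K Ec l h w
    = ((\<chi> i. fderiv (residual l) (w, h) ((0, axis i 1), 0)),
       - (\<chi> i. fderiv (residual l) (w, h) ((axis i 1, 0), 0)))"
  unfolding ham_field_Kt mod_field_eq fderiv_residual dp_def dq_def
  by (simp add: vec_eq_iff algebra_simps)

lemma Et_conserved: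
  assumes sol: "solves_on (mod_field H N K Ec l h) y {t..t+h}" and s: "s \<in> {t..t+h}"
  shows "Et H Ec l h (y s) = Et H Ec l h (y t)"
proof -
  have "((\<lambda>\<sigma>. Et H Ec l h (y \<sigma>)) has_vector_derivative 0) (at \<sigma> within {t..t+h})"
    if \<sigma>: "\<sigma> \<in> {t..t+h}" for \<sigma>
  proof -
    have dy: "(y has_vector_derivative mod_field H N K Ec l h (y \<sigma>)) (at \<sigma> within {t..t+h})"
      using sol \<sigma> unfolding solves_on_def by blast
    have dE: "(Et H Ec l h has_derivative fderiv (Et H Ec l h) (y \<sigma>)) (at (y \<sigma>) within y ` {t..t+h})"
      using has_derivative_fderiv[OF differentiable_Et] has_derivative_at_withinI by blast
    have "fderiv (Et H Ec l h) (y \<sigma>) (mod_field H N K Ec l h (y \<sigma>)) = 0"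
      unfolding mod_field_eq fderiv_cart_Pair[OF differentiable_Et] by (simp add: inner_commute)
    with vector_derivative_diff_chain_within[OF dy dE] show ?thesis by (simp add: o_def)
  qed
  then obtain c where "\<And>\<sigma>. \<sigma> \<in> {t..t+h} \<Longrightarrow> Et H Ec l h (y \<sigma>) = c"
    using has_vector_derivative_zero_constant[of "{t..t+h}" "\<lambda>\<sigma>. Et H Ec l h (y \<sigma>)"] by auto
  moreover have "t \<in> {t..t+h}" using s by auto
  ultimately show ?thesis using s by metis
qed

lemma ham_field_lipschitz_bound:
  "\<exists>L M. 0 \<le> L \<and> 0 \<le> M \<and> (\<forall>h\<in>{0..1}. \<forall>E\<in>{c - 1..c + 1}. \<forall>a\<in>cball x0 1. \<forall>b\<in>cball x0 1.
     norm (ham_field (\<lambda>w. Kt H N K l h w E) a - ham_field (\<lambda>w. Kt H N K l h w E) b) \<le> L * norm (a - b)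
     \<and> norm (ham_field (\<lambda>w. Kt H N K l h w E) a) \<le> M)"
proof -
  define f :: "('n phase \<times> real) \<times> real \<Rightarrow> 'n phase"
    where "f y = ham_field (\<lambda>w. Kt H N K l (snd (fst y)) w (snd y)) (fst (fst y))" for y
  have f: "f y = ((\<chi> i. fderiv (Kt_joint l) y (((0, axis i 1), 0), 0)),
      - (\<chi> i. fderiv (Kt_joint l) y (((axis i 1, 0), 0), 0)))" for y
    unfolding f_def ham_field_Kt by simp
  have sq: "smooth (\<lambda>y. fst (f y) $ i)" and sp: "smooth (\<lambda>y. snd (f y) $ i)" for i
    unfolding f by (simp_all add: smooth_minus smooth_fderiv smooth_Kt_joint)
  define Q where "Q = (cball x0 1 \<times> {0..1::real}) \<times> {c - 1..c + 1}"
  have "compact Q" "convex Q" unfolding Q_def by (auto intro!: compact_Times convex_Times)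
  from cart_Pair_smooth_lipschitz_bound[OF sq sp this] obtain L M where LM: "0 \<le> L" "0 \<le> M"
    "\<forall>a\<in>Q. \<forall>b\<in>Q. norm (f a - f b) \<le> L * norm (a - b) \<and> norm (f a) \<le> M"
    by blast
  have "norm (ham_field (\<lambda>w. Kt H N K l h w E) a - ham_field (\<lambda>w. Kt H N K l h w E) b) \<le> L * norm (a - b)
      \<and> norm (ham_field (\<lambda>w. Kt H N K l h w E) a) \<le> M"
    if "h \<in> {0..1}" "E \<in> {c - 1..c + 1}" "a \<in> cball x0 1" "b \<in> cball x0 1" for h E a b
  proof -
    have "((a, h), E) \<in> Q" "((b, h), E) \<in> Q" using that unfolding Q_def by auto
    with LM(3) have "norm (f ((a, h), E) - f ((b, h), E)) \<le> L * norm (((a, h), E) - ((b, h), E))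
        \<and> norm (f ((a, h), E)) \<le> M"
      by blast
    then show ?thesis by (simp add: f_def)
  qed
  with LM(1,2) show ?thesis by blast
qed

lemma mod_field_bound:
  "\<exists>M. 0 \<le> M \<and> (\<forall>h\<in>{0..1}. \<forall>w\<in>cball x0 1. norm (mod_field H N K Ec l h w) \<le> M)"
proof -
  define f :: "'n phase \<times> real \<Rightarrow> 'n phase" where "f z = mod_field H N K Ec l (snd z) (fst z)" for z
  have f: "f z = ((\<chi> i. - dK_dE l z * fderiv (Et_joint l) z ((0, axis i 1), 0)),
      (\<chi> i. dK_dE l z * fderiv (Et_joint l) z ((axis i 1, 0), 0)))" for z
    unfolding f_def mod_field_eq dp_def dq_def fderiv_Et by (simp add: vec_eq_iff)
  have sq: "smooth (\<lambda>z. fst (f z) $ i)" and sp: "smooth (\<lambda>z. snd (f z) $ i)" for i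
    unfolding f by (simp_all add: smooth_minus smooth_mult smooth_fderiv smooth_dK_dE smooth_Et_joint)
  have "compact (cball x0 1 \<times> {0..1::real})" "convex (cball x0 1 \<times> {0..1::real})"
    by (auto intro!: compact_Times convex_Times)
  from cart_Pair_smooth_lipschitz_bound[OF sq sp this] obtain M where
    "0 \<le> M" "\<forall>z\<in>cball x0 1 \<times> {0..1}. norm (f z) \<le> M"
    by blast
  then show ?thesis unfolding f_def by auto
qed

lemma residual_field_bound:
  "\<exists>A. \<forall>h\<in>{0..1}. \<forall>w\<in>cball x0 1.
     norm (ham_field (\<lambda>v. Kt H N K l h v (Et H Ec l h w)) w - mod_field H N K Ec l h w) \<le> A * h ^ Suc l"
proof -
  have "\<forall>u. \<exists>A. \<forall>w\<in>cball x0 1. \<forall>h. 0 \<le> h \<and> h \<le> 1 \<longrightarrow>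
      \<bar>fderiv (residual l) (w, h) (u, 0)\<bar> \<le> A * h ^ Suc l"
    using residual_fderiv_bound[OF compact_cball] by blast
  from choice[OF this] obtain A where A: "\<And>u w h. w \<in> cball x0 1 \<Longrightarrow> 0 \<le> h \<Longrightarrow> h \<le> 1 \<Longrightarrow>
      \<bar>fderiv (residual l) (w, h) (u, 0)\<bar> \<le> A u * h ^ Suc l"
    by blast
  have A': "\<bar>fderiv (residual l) (w, h) (u, 0)\<bar> \<le> \<bar>A u\<bar> * h ^ Suc l"
    if "w \<in> cball x0 1" "h \<in> {0..1}" for u w h
  proof -
    have "A u * h ^ Suc l \<le> \<bar>A u\<bar> * h ^ Suc l"
      using that by (intro mult_right_mono) auto
    then show ?thesis using A[of w h u] that by simp
  qed
  have "norm (ham_field (\<lambda>v. Kt H N K l h v (Et H Ec l h w)) w - mod_field H N K Ec l h w)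
      \<le> (\<Sum>i\<in>UNIV. \<bar>A (0, axis i 1)\<bar> + \<bar>A (axis i 1, 0)\<bar>) * h ^ Suc l"
    if h: "h \<in> {0..1}" and w: "w \<in> cball x0 1" for h w
  proof -
    have "norm (ham_field (\<lambda>v. Kt H N K l h v (Et H Ec l h w)) w - mod_field H N K Ec l h w)
        \<le> (\<Sum>i\<in>UNIV. \<bar>fderiv (residual l) (w, h) ((0, axis i 1), 0)\<bar>)
          + (\<Sum>i\<in>UNIV. \<bar>- fderiv (residual l) (w, h) ((axis i 1, 0), 0)\<bar>)"
      unfolding ham_field_minus_mod_field by (rule order_trans[OF norm_cart_Pair_le_sum]) simp
    also have "\<dots> \<le> (\<Sum>i\<in>UNIV. \<bar>A (0, axis i 1)\<bar> * h ^ Suc l) + (\<Sum>i\<in>UNIV. \<bar>A (axis i 1, 0)\<bar> * h ^ Suc l)"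
      unfolding abs_minus_cancel using A'[OF w h] by (intro add_mono sum_mono)
    finally show ?thesis by (simp add: sum_distrib_right sum.distrib distrib_right)
  qed
  then show ?thesis by blast
qed

text \<open>As \<open>E^(l)\<close> is conserved along \<open>y\<close>, the solution only sees the Hamiltonian field at the
  frozen energy \<open>E^(l)(x)\<close>, where the residual estimate applies.\<close>

lemma mod_flow_step_close_to_ham_flow:
  assumes L: "0 \<le> L" and M: "0 \<le> M"
    and ham: "\<And>a b. a \<in> cball x0 1 \<Longrightarrow> b \<in> cball x0 1 \<Longrightarrow>
      norm (ham_field (\<lambda>w. Kt H N K l h w (Et H Ec l h x)) a - ham_field (\<lambda>w. Kt H N K l h w (Et H Ec l h x)) b)
        \<le> L * norm (a - b)
      \<and> norm (ham_field (\<lambda>w. Kt H N K l h w (Et H Ec l h x)) a) \<le> M"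
    and mod: "\<And>a. a \<in> cball x0 1 \<Longrightarrow> norm (mod_field H N K Ec l h a) \<le> M"
    and res: "\<And>w. w \<in> cball x0 1 \<Longrightarrow>
      norm (ham_field (\<lambda>v. Kt H N K l h v (Et H Ec l h w)) w - mod_field H N K Ec l h w) \<le> A * h ^ Suc l"
    and h: "0 < h" "h * M < 1/2" "h * L \<le> 1/2" and x: "dist x x0 < 1/2"
    and y: "solves_on (mod_field H N K Ec l h) y {t..t+h}" "y t = x"
  shows "\<exists>z. solves_on (ham_field (\<lambda>w. Kt H N K l h w (Et H Ec l h x))) z {t..t+h} \<and> z t = x \<and>
    norm (y (t + h) - z (t + h)) \<le> (2 * A) * h ^ (l + 2)"
proof -
  have "\<exists>z. solves_on (ham_field (\<lambda>w. Kt H N K l h w (Et H Ec l h x))) z {t..t+h} \<and> z t = y t \<and>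
      norm (y (t + h) - z (t + h)) \<le> 2 * h * (A * h ^ Suc l)"
  proof (rule lipschitz_solution_close_to_perturbed[OF y(1) h(1) _ _ _ L M h(3)])
    show "\<And>a b. a \<in> cball x0 1 \<Longrightarrow> b \<in> cball x0 1 \<Longrightarrow>
        norm (ham_field (\<lambda>w. Kt H N K l h w (Et H Ec l h x)) a
          - ham_field (\<lambda>w. Kt H N K l h w (Et H Ec l h x)) b) \<le> L * norm (a - b)"
      using ham by blast
    show "\<And>a. a \<in> cball x0 1 \<Longrightarrow> norm (mod_field H N K Ec l h a) \<le> M
        \<and> norm (ham_field (\<lambda>w. Kt H N K l h w (Et H Ec l h x)) a) \<le> M"
      using ham mod by blast
    show "dist x0 (y t) + h * M < 1" using y(2) x h(2) by (simp add: dist_commute)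
  next
    fix s assume s: "s \<in> {t..t+h}" and ys: "y s \<in> cball x0 1"
    have "Et H Ec l h (y s) = Et H Ec l h x" using Et_conserved[OF y(1) s] y(2) by simp
    with res[OF ys] show "norm (mod_field H N K Ec l h (y s)
        - ham_field (\<lambda>w. Kt H N K l h w (Et H Ec l h x)) (y s)) \<le> A * h ^ Suc l"
      by (simp add: norm_minus_commute)
  qed
  then show ?thesis using y(2) by (simp add: algebra_simps)
qed

lemma mod_flow_close_to_ham_flow:
  "\<exists>\<delta> A. \<delta> > 0 \<and> (\<forall>h x t y. 0 < h \<and> h < \<delta> \<and> dist x x0 < \<delta> \<and>
     solves_on (mod_field H N K Ec l h) y {t..t+h} \<and> y t = x \<longrightarrow>
     (\<exists>z. solves_on (ham_field (\<lambda>w. Kt H N K l h w (Et H Ec l h x))) z {t..t+h} \<and> z t = x \<and>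
        norm (y (t + h) - z (t + h)) \<le> A * h ^ (l + 2)))"
proof -
  obtain L Mg where L: "0 \<le> L" "0 \<le> Mg" and LM: "\<And>h E a b. h \<in> {0..1} \<Longrightarrow>
      E \<in> {H x0 - 1..H x0 + 1} \<Longrightarrow> a \<in> cball x0 1 \<Longrightarrow> b \<in> cball x0 1 \<Longrightarrow>
      norm (ham_field (\<lambda>w. Kt H N K l h w E) a - ham_field (\<lambda>w. Kt H N K l h w E) b) \<le> L * norm (a - b)
      \<and> norm (ham_field (\<lambda>w. Kt H N K l h w E) a) \<le> Mg"
    using ham_field_lipschitz_bound[of "H x0"] by blast
  obtain Mf where Mf: "0 \<le> Mf"
    "\<And>h w. h \<in> {0..1} \<Longrightarrow> w \<in> cball x0 1 \<Longrightarrow> norm (mod_field H N K Ec l h w) \<le> Mf"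
    using mod_field_bound by blast
  obtain A where A: "\<And>h w. h \<in> {0..1} \<Longrightarrow> w \<in> cball x0 1 \<Longrightarrow>
      norm (ham_field (\<lambda>v. Kt H N K l h v (Et H Ec l h w)) w - mod_field H N K Ec l h w) \<le> A * h ^ Suc l"
    using residual_field_bound by blast
  obtain \<delta>E where \<delta>E: "\<delta>E > 0"
    "\<And>w h. dist w x0 < \<delta>E \<and> \<bar>h\<bar> < \<delta>E \<Longrightarrow> \<bar>Et_joint l (w, h) - Et_joint l (x0, 0)\<bar> < 1"
    using continuous_at_Pair_zero_eventually[OF smooth_isCont[OF smooth_Et_joint] zero_less_one] by blast
  obtain \<delta>M where \<delta>M: "\<delta>M > 0" "\<And>h. 0 < h \<and> h < \<delta>M \<Longrightarrow> h * (Mf + Mg) < 1/2"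
    using exists_small_step[of "1/2" "Mf + Mg"] by auto
  obtain \<delta>L where \<delta>L: "\<delta>L > 0" "\<And>h. 0 < h \<and> h < \<delta>L \<Longrightarrow> h * L < 1/2"
    using exists_small_step[of "1/2" L] by auto
  define \<delta> where "\<delta> = min (min (1/2) \<delta>E) (min \<delta>M \<delta>L)"
  have "\<exists>z. solves_on (ham_field (\<lambda>w. Kt H N K l h w (Et H Ec l h x))) z {t..t+h} \<and> z t = x \<and>
      norm (y (t + h) - z (t + h)) \<le> (2 * A) * h ^ (l + 2)"
    if h: "0 < h" "h < \<delta>" and x: "dist x x0 < \<delta>"
      and y: "solves_on (mod_field H N K Ec l h) y {t..t+h}" "y t = x" for h x t y
  proof (rule mod_flow_step_close_to_ham_flow[OF L(1) _ _ _ _ h(1) _ _ _ y])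
    have h1: "h \<in> {0..1}" using h unfolding \<delta>_def by auto
    have "Et H Ec l h x \<in> {H x0 - 1..H x0 + 1}"
      using \<delta>E(2)[of x h] h x unfolding \<delta>_def by (auto simp: Et_0)
    from LM[OF h1 this] Mf(2)[OF h1] L(2) Mf(1) show
      "\<And>a b. a \<in> cball x0 1 \<Longrightarrow> b \<in> cball x0 1 \<Longrightarrow>
        norm (ham_field (\<lambda>w. Kt H N K l h w (Et H Ec l h x)) a - ham_field (\<lambda>w. Kt H N K l h w (Et H Ec l h x)) b)
          \<le> L * norm (a - b) \<and> norm (ham_field (\<lambda>w. Kt H N K l h w (Et H Ec l h x)) a) \<le> Mf + Mg"
      "\<And>a. a \<in> cball x0 1 \<Longrightarrow> norm (mod_field H N K Ec l h a) \<le> Mf + Mg"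
      by fastforce+
    show "\<And>w. w \<in> cball x0 1 \<Longrightarrow> norm (ham_field (\<lambda>v. Kt H N K l h v (Et H Ec l h w)) w
        - mod_field H N K Ec l h w) \<le> A * h ^ Suc l"
      using A[OF h1] by blast
    show "0 \<le> Mf + Mg" "h * (Mf + Mg) < 1/2" "h * L \<le> 1/2" "dist x x0 < 1/2"
      using Mf(1) L(2) \<delta>M(2)[of h] \<delta>L(2)[of h] h x unfolding \<delta>_def by auto
  qed
  moreover have "\<delta> > 0" unfolding \<delta>_def using \<delta>E \<delta>M \<delta>L by simp
  ultimately show ?thesis by blast
qed

theorem modified_flow_local_error:
  assumes "is_modified_hamiltonian H N K Psi"
  shows "\<exists>C \<delta>. \<delta> > 0 \<and> (\<forall>h x t y. 0 < h \<and> h < \<delta> \<and> dist x x0 < \<delta> \<and>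
    solves_on (mod_field H N K Ec l h) y {t..t+h} \<and> y t = x \<longrightarrow>
    norm (Psi h (Et H Ec l h x) x - y (t + h)) \<le> C * h ^ (l + 2))"
proof -
  obtain C1 \<delta>1 where \<delta>1: "\<delta>1 > 0" and C1: "\<And>h x E t z. 0 < h \<Longrightarrow> h < \<delta>1 \<Longrightarrow> dist x x0 < \<delta>1 \<Longrightarrow>
      \<bar>E - H x0\<bar> < \<delta>1 \<Longrightarrow> solves_on (ham_field (\<lambda>w. Kt H N K l h w E)) z {t..t+h} \<Longrightarrow> z t = x \<Longrightarrow>
      norm (Psi h E x - z (t + h)) \<le> C1 * h ^ (l + 2)"
    using assms unfolding is_modified_hamiltonian_def by meson
  obtain \<delta>2 A where \<delta>2: "\<delta>2 > 0" and close: "\<And>h x t y. 0 < h \<Longrightarrow> h < \<delta>2 \<Longrightarrow> dist x x0 < \<delta>2 \<Longrightarrow>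
      solves_on (mod_field H N K Ec l h) y {t..t+h} \<Longrightarrow> y t = x \<Longrightarrow>
      \<exists>z. solves_on (ham_field (\<lambda>w. Kt H N K l h w (Et H Ec l h x))) z {t..t+h} \<and> z t = x \<and>
        norm (y (t + h) - z (t + h)) \<le> A * h ^ (l + 2)"
    using mod_flow_close_to_ham_flow[of x0 l] by metis
  obtain \<delta>3 where \<delta>3: "\<delta>3 > 0"
    "\<And>w h. dist w x0 < \<delta>3 \<and> \<bar>h\<bar> < \<delta>3 \<Longrightarrow> \<bar>Et_joint l (w, h) - Et_joint l (x0, 0)\<bar> < \<delta>1"
    using continuous_at_Pair_zero_eventually[OF smooth_isCont[OF smooth_Et_joint] \<delta>1] by blast
  have "norm (Psi h (Et H Ec l h x) x - y (t + h)) \<le> (C1 + A) * h ^ (l + 2)"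
    if h: "0 < h" "h < min \<delta>1 (min \<delta>2 \<delta>3)" and x: "dist x x0 < min \<delta>1 (min \<delta>2 \<delta>3)"
      and y: "solves_on (mod_field H N K Ec l h) y {t..t+h}" "y t = x" for h x t y
  proof -
    obtain z where z: "solves_on (ham_field (\<lambda>w. Kt H N K l h w (Et H Ec l h x))) z {t..t+h}" "z t = x"
      and yz: "norm (y (t + h) - z (t + h)) \<le> A * h ^ (l + 2)"
      using close[OF h(1) _ _ y] h x by auto
    have "\<bar>Et H Ec l h x - H x0\<bar> < \<delta>1" using \<delta>3(2)[of x h] h x by (simp add: Et_0)
    then have "norm (Psi h (Et H Ec l h x) x - z (t + h)) \<le> C1 * h ^ (l + 2)"
      using C1[OF h(1) _ _ _ z] h x by simp
    then show ?thesis
      using yz norm_triangle_ineq[of "Psi h (Et H Ec l h x) x - z (t + h)" "z (t + h) - y (t + h)"]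
      by (simp add: norm_minus_commute algebra_simps)
  qed
  then show ?thesis using \<delta>1 \<delta>2 \<delta>3 by (intro exI[of _ "C1 + A"] exI[of _ "min \<delta>1 (min \<delta>2 \<delta>3)"]) auto
qed

theorem mod_field_conf_hamiltonian:
  "\<exists>\<delta>>0. \<forall>h. 0 < h \<and> h < \<delta> \<longrightarrow>
     conf_hamiltonian_on (mod_field H N K Ec l h) (Et H Ec l h) (Nmod H N K Ec l h) (ball x0 \<delta>)"
proof -
  obtain \<delta> where \<delta>: "\<delta> > 0"
    "\<And>w h. dist w x0 < \<delta> \<and> \<bar>h\<bar> < \<delta> \<Longrightarrow> \<bar>dK_dE l (w, h) - dK_dE l (x0, 0)\<bar> < N x0"
    using continuous_at_Pair_zero_eventually[OF smooth_isCont[OF smooth_dK_dE] N_pos[rule_format, of x0]]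
    by blast
  have "Nmod H N K Ec l h w > 0" if "0 < h" "h < \<delta>" "w \<in> ball x0 \<delta>" for h w
    using \<delta>(2)[of w h] that
    by (simp add: Nmod_eq Et_0 fderiv_Kt_joint_energy_at_0 dist_commute abs_less_iff)
  then show ?thesis
    using \<delta>(1) by (auto simp: conf_hamiltonian_on_def mod_field_eq Nmod_eq)
qed

end

theorem theorem4p2:
  fixes H N :: "(real^'n) \<times> (real^'n) \<Rightarrow> real"
    and K :: "nat \<Rightarrow> (real^'n) \<times> (real^'n) \<Rightarrow> real \<Rightarrow> real"
    and Psi :: "real \<Rightarrow> real \<Rightarrow> (real^'n) \<times> (real^'n) \<Rightarrow> (real^'n) \<times> (real^'n)"
    and Ec :: "nat \<Rightarrow> (real^'n) \<times> (real^'n) \<Rightarrow> real"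
    and l :: nat
  assumes "smooth H" and "smooth N" and "\<forall>x. N x > 0"
    and "\<forall>j\<ge>1. smooth (\<lambda>z::((real^'n) \<times> (real^'n)) \<times> real. K j (fst z) (snd z))"
    and "symplectic_integrator H N Psi"
    and "is_modified_hamiltonian H N K Psi"
    and "modified_conformal_hamiltonian H N K Ec"
  shows "(\<forall>x0. \<exists>C \<delta>. \<delta> > 0 \<and>
            (\<forall>h x t y. 0 < h \<and> h < \<delta> \<and> dist x x0 < \<delta> \<and>
               solves_on (mod_field H N K Ec l h) y {t..t+h} \<and> y t = x \<longrightarrow>
               norm (Psi h (Et H Ec l h x) x - y (t + h)) \<le> C * h ^ (l + 2)))
       \<and> (\<forall>x0. \<exists>\<delta>>0. \<forall>h. 0 < h \<and> h < \<delta> \<longrightarrow>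
            conf_hamiltonian_on (mod_field H N K Ec l h) (Et H Ec l h) (Nmod H N K Ec l h) (ball x0 \<delta>))"
proof -
  interpret modified_conformal_setting H N K Ec
    using assms by unfold_locales auto
  show ?thesis
    using modified_flow_local_error[OF assms(6)] mod_field_conf_hamiltonian by blast
qed

end
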